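(* Let $A$ and $B$ be (possibly isomorphic) strongly regular graphs with the same parameters, and let $A'$, $B'$ be obtained by individualizing a single vertex $a_1\in V(A)$, resp. $b_1\in V(B)$ (coloring it with color $1$; all other vertices uncolored). Let $G=G(A',B')$ and $H=G(A',A')$. (1) $\omega^{(r)}(G)=\omega^{(r)}(H)$ for all integers $r\ge0$, and therefore $\omega^{(\bullet)}(G)=\omega^{(\bullet)}(H)$. (2) If $\mathrm{WL}_{3/2}(A')\ne\mathrm{WL}_{3/2}(B')$, then $\mathrm{WL}_{3/2}(G)\ne\mathrm{WL}_{3/2}(H)$.
   Context: Graphs are finite, simple and undirected. A strongly regular graph with parameters $(n,d,\lambda,\mu)$ is an $n$-vertex $d$-regular graph in which any two adjacent vertices have $\lambda$ common neighbours and any two distinct non-adjacent vertices have $\mu$ common neighbours. Construction $G(A',B')$ (uncolored) for $m=1$: the vertex-disjoint union of $A$ and $B$ plus a connecting vertex $c_1$ adjacent to $a_1$ and $b_1$ and one pendant vertex $p_{1,1}$ adjacent only to $c_1$. $H=G(A',A')$ is built in the same way from two disjoint copies of $A'$. Walk invariants: $w_k(x,y)$ = number of walks of length $k$ from $x$ to $y$ in an $N$-vertex graph, $w_*(x,y)=(w_0(x,y),\dots,w_{N-1}(x,y))$; $\omega_0(x)=w_*(x,x)$, $\omega_{r+1}(x)=\big(\omega_r(x),\{\!\{(w_*(x,y),\omega_r(y))\}\!\}_{y}\big)$ ($\{\!\{\cdot\}\!\}$ = multiset); $\omega^{(r)}(G)=\{\!\{\omega_r(x)\}\!\}_{x\in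 V(G)}$ and $\omega^{(\bullet)}(G)=\omega^{(N)}(G)$. Color refinement on a vertex-colored $N$-vertex graph $X$: $C^0(x)$ is the color of $x$ (common default for uncolored vertices), $C^{r+1}(x)=\big(C^r(x),\{\!\{C^r(y)\}\!\}_{y\in N(x)}\big)$, $\mathrm{WL}_1(X)=\{\!\{C^N(x)\}\!\}_{x}$. For a vertex $x$, $X_x$ is $X$ with $x$ additionally given a special new color (the same special color for every choice of $x$, distinct from all colors already used). $\mathrm{WL}_{3/2}(X)=\{\!\{\mathrm{WL}_1(X_x)\}\!\}_{x\in V(X)}$. *)

theory Defs
  imports Main "HOL-Library.Multiset"
begin

definition simple_graph :: "'a set \<Rightarrow> ('a \<Rightarrow> 'a \<Rightarrow> bool) \<Rightarrow> bool" where
  "simple_graph V E \<longleftrightarrow> finite V \<and> (\<forall>x y. E x y \<longrightarrow> x \<in> V \<and> y \<in> V)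
     \<and> (\<forall>x y. E x y \<longrightarrow> E y x) \<and> (\<forall>x. \<not> E x x)"

definition nbrs :: "'a set \<Rightarrow> ('a \<Rightarrow> 'a \<Rightarrow> bool) \<Rightarrow> 'a \<Rightarrow> 'a set" where
  "nbrs V E x = {y \<in> V. E x y}"

definition strongly_regular ::
  "'a set \<Rightarrow> ('a \<Rightarrow> 'a \<Rightarrow> bool) \<Rightarrow> nat \<Rightarrow> nat \<Rightarrow> nat \<Rightarrow> nat \<Rightarrow> bool" where
  "strongly_regular V E n d lam mu \<longleftrightarrow> simple_graph V E \<and> card V = n
     \<and> (\<forall>x\<in>V. card (nbrs V E x) = d)
     \<and> (\<forall>x\<in>V. \<forall>y\<in>V. E x y \<longrightarrow> card (nbrs V E x \<inter> nbrs V E y) = lam)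
     \<and> (\<forall>x\<in>V. \<forall>y\<in>V. x \<noteq> y \<and> \<not> E x y \<longrightarrow> card (nbrs V E x \<inter> nbrs V E y) = mu)"

text \<open>Construction G(A',B') for m = 1 (uncolored).\<close>
datatype ('a, 'b) gvert = InA 'a | InB 'b | Conn | Pend

definition constr_V :: "'a set \<Rightarrow> 'b set \<Rightarrow> ('a, 'b) gvert set" where
  "constr_V VA VB = InA ` VA \<union> InB ` VB \<union> {Conn, Pend}"

fun constr_E :: "('a \<Rightarrow> 'a \<Rightarrow> bool) \<Rightarrow> ('b \<Rightarrow> 'b \<Rightarrow> bool) \<Rightarrow> 'a \<Rightarrow> 'b
   \<Rightarrow> ('a, 'b) gvert \<Rightarrow> ('a, 'b) gvert \<Rightarrow> bool" where
  "constr_E EA EB a1 b1 (InA x) (InA y) = EA x y"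
| "constr_E EA EB a1 b1 (InB x) (InB y) = EB x y"
| "constr_E EA EB a1 b1 Conn (InA x) = (x = a1)"
| "constr_E EA EB a1 b1 (InA x) Conn = (x = a1)"
| "constr_E EA EB a1 b1 Conn (InB x) = (x = b1)"
| "constr_E EA EB a1 b1 (InB x) Conn = (x = b1)"
| "constr_E EA EB a1 b1 Conn Pend = True"
| "constr_E EA EB a1 b1 Pend Conn = True"
| "constr_E EA EB a1 b1 _ _ = False"

fun walks :: "'a set \<Rightarrow> ('a \<Rightarrow> 'a \<Rightarrow> bool) \<Rightarrow> nat \<Rightarrow> 'a \<Rightarrow> 'a \<Rightarrow> nat" where
  "walks V E 0 x y = (if x = y then 1 else 0)"
| "walks V E (Suc k) x y = (\<Sum>z\<in>nbrs V E x. walks V E k z y)"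

definition wstar :: "'a set \<Rightarrow> ('a \<Rightarrow> 'a \<Rightarrow> bool) \<Rightarrow> 'a \<Rightarrow> 'a \<Rightarrow> nat list" where
  "wstar V E x y = map (\<lambda>k. walks V E k x y) [0..<card V]"

datatype winv = W0 "nat list" | WS winv "(nat list \<times> winv) multiset"

fun omega :: "'a set \<Rightarrow> ('a \<Rightarrow> 'a \<Rightarrow> bool) \<Rightarrow> nat \<Rightarrow> 'a \<Rightarrow> winv" where
  "omega V E 0 x = W0 (wstar V E x x)"
| "omega V E (Suc r) x =
     WS (omega V E r x) (image_mset (\<lambda>y. (wstar V E x y, omega V E r y)) (mset_set V))"

definition omega_ms :: "'a set \<Rightarrow> ('a \<Rightarrow> 'a \<Rightarrow> bool) \<Rightarrow> nat \<Rightarrow> winv multiset" where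
  "omega_ms V E r = image_mset (omega V E r) (mset_set V)"

definition omega_bullet :: "'a set \<Rightarrow> ('a \<Rightarrow> 'a \<Rightarrow> bool) \<Rightarrow> winv multiset" where
  "omega_bullet V E = omega_ms V E (card V)"

datatype 'c crcol = C0 'c | CS "'c crcol" "'c crcol multiset"

fun cref :: "'a set \<Rightarrow> ('a \<Rightarrow> 'a \<Rightarrow> bool) \<Rightarrow> ('a \<Rightarrow> 'c) \<Rightarrow> nat \<Rightarrow> 'a \<Rightarrow> 'c crcol" where
  "cref V E col 0 x = C0 (col x)"
| "cref V E col (Suc r) x =
     CS (cref V E col r x) (image_mset (cref V E col r) (mset_set (nbrs V E x)))"

definition WL1 :: "'a set \<Rightarrow> ('a \<Rightarrow> 'a \<Rightarrow> bool) \<Rightarrow> ('a \<Rightarrow> 'c) \<Rightarrow> 'c crcol multiset" where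
  "WL1 V E col = image_mset (cref V E col (card V)) (mset_set V)"

definition indiv :: "('a \<Rightarrow> 'c) \<Rightarrow> 'a \<Rightarrow> 'a \<Rightarrow> 'c option" where
  "indiv col x = (\<lambda>v. if v = x then None else Some (col v))"

definition WL32 :: "'a set \<Rightarrow> ('a \<Rightarrow> 'a \<Rightarrow> bool) \<Rightarrow> ('a \<Rightarrow> 'c) \<Rightarrow> 'c option crcol multiset multiset" where
  "WL32 V E col = image_mset (\<lambda>x. WL1 V E (indiv col x)) (mset_set V)"

definition single_col :: "'a \<Rightarrow> 'a \<Rightarrow> nat" where
  "single_col a1 = (\<lambda>v. if v = a1 then 1 else 0)"

definition uncolored :: "'a \<Rightarrow> nat" where
  "uncolored = (\<lambda>_. 0)"

end

theory Submission
  imports Defs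
begin

text \<open>Classify the vertices of \<open>G(A', B')\<close> into eight classes: a vertex of \<open>A\<close> equal, adjacent or
  non-adjacent to \<open>a\<^sub>1\<close>, likewise for \<open>B\<close> and \<open>b\<^sub>1\<close>, the connecting vertex and the pendant vertex.
  Since \<open>A\<close> and \<open>B\<close> are strongly regular with the same parameters, the adjacency operator of \<open>G\<close>
  preserves the span of the class indicators together with the functions ``equal to / adjacent to /
  non-adjacent to \<open>y\<close> on the side of \<open>y\<close>''. Hence the number of walks from \<open>x\<close> to \<open>y\<close> only depends on
  the classes of \<open>x\<close>, \<open>y\<close> and on whether they are equal, adjacent or not; so \<open>\<omega>\<^sub>r\<close> factors through
  the classes, whose sizes are fixed by the parameters.

  For (2), if \<open>\<mu> > 0\<close> then \<open>A\<close> has diameter at most 2. In the colour refinement of \<open>G\<close> with a vertex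
  \<open>x\<close> of \<open>A\<close> individualised, the connecting vertex is recognised by its degrees, the vertices of \<open>A\<close>
  are those within distance 2 of \<open>x\<close> not reached through it, and stripping the connecting vertex
  from their colours gives the colours of \<open>A'\<close> with \<open>x\<close> individualised. So \<open>WL\<^sub>3\<^sub>/\<^sub>2(G(A', B'))\<close>
  determines \<open>WL\<^sub>3\<^sub>/\<^sub>2(A') + WL\<^sub>3\<^sub>/\<^sub>2(B')\<close>. If \<open>\<mu> = 0\<close> (a disjoint union of cliques) or \<open>n = 1\<close>,
  then \<open>WL\<^sub>3\<^sub>/\<^sub>2(A')\<close> only depends on the parameters, so the hypothesis of (2) cannot hold.\<close>

lemma nbrs_subset: "nbrs V E x \<subseteq> V"
  by (simp add: nbrs_def)

lemma finite_nbrs: "finite V \<Longrightarrow> finite (nbrs V E x)"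
  by (rule finite_subset[OF nbrs_subset])

lemma image_mset_mset_set_const:
  assumes "finite S" and "\<And>x. x \<in> S \<Longrightarrow> f x = c"
  shows "image_mset f (mset_set S) = replicate_mset (card S) c"
proof -
  have "image_mset f (mset_set S) = image_mset (\<lambda>_. c) (mset_set S)"
    using assms by (intro image_mset_cong) auto
  then show ?thesis by (simp add: image_mset_const_eq)
qed

lemma image_mset_mset_set_fibres:
  assumes "finite S" "finite R" "f ` S \<subseteq> R"
  shows "image_mset f (mset_set S) = (\<Sum>p\<in>R. replicate_mset (card {x\<in>S. f x = p}) p)"
proof (rule multiset_eqI)
  fix q
  have lhs: "count (image_mset f (mset_set S)) q = card {x\<in>S. f x = q}"
    using assms(1) by (simp add: count_image_mset Int_def conj_commute)
  have rhs: "count (\<Sum>p\<in>R. replicate_mset (card {x\<in>S. f x = p}) p) q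
      = (\<Sum>p\<in>R. if p = q then card {x\<in>S. f x = p} else 0)"
    by (auto simp: count_sum intro: sum.cong)
  show "count (image_mset f (mset_set S)) q = count (\<Sum>p\<in>R. replicate_mset (card {x\<in>S. f x = p}) p) q"
  proof (cases "q \<in> R")
    case True
    then show ?thesis using lhs rhs assms(2) by simp
  next
    case False
    then have empty: "{x\<in>S. f x = q} = {}" using assms(3) by auto
    have "(\<Sum>p\<in>R. if p = q then card {x\<in>S. f x = p} else 0) = 0"
      using False by (intro sum.neutral) auto
    then show ?thesis using lhs rhs empty by simp
  qed
qed

lemma sum_card_fibres:
  assumes "finite S" "finite R" "f ` S \<subseteq> R"
  shows "(\<Sum>p\<in>R. card {x\<in>S. f x = p}) = card S"
proof -
  have "size (image_mset f (mset_set S)) = card S" by simp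
  then show ?thesis using image_mset_mset_set_fibres[OF assms] by simp
qed

lemma mset_set_split:
  assumes "finite V" "A \<subseteq> V"
  shows "mset_set V = mset_set A + mset_set (V - A)"
proof -
  have "V = A \<union> (V - A)" using assms(2) by auto
  also have "mset_set \<dots> = mset_set A + mset_set (V - A)"
    using assms by (intro mset_set_Union) (auto intro: finite_subset)
  finally show ?thesis .
qed

lemma image_mset_mset_set_remove:
  assumes "finite A" "v \<in> A"
  shows "image_mset f (mset_set (A - {v})) = image_mset f (mset_set A) - {#f v#}"
  using assms by (simp add: mset_set.remove)

lemma cref_bij_betw:
  assumes fin: "finite V" and bij: "bij_betw f V V'"
    and edge: "\<And>x y. x \<in> V \<Longrightarrow> y \<in> V \<Longrightarrow> E' (f x) (f y) = E x y"
    and col: "\<And>x. x \<in> V \<Longrightarrow> col' (f x) = col x"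
    and x: "x \<in> V"
  shows "cref V' E' col' r (f x) = cref V E col r x"
  using x
proof (induction r arbitrary: x)
  case 0
  then show ?case using col by simp
next
  case (Suc r)
  have V': "V' = f ` V" and inj: "inj_on f V" using bij by (auto simp: bij_betw_def)
  have nbrs: "nbrs V' E' (f x) = f ` nbrs V E x"
    using edge[OF Suc.prems] unfolding V' nbrs_def by auto
  have inj_nbrs: "inj_on f (nbrs V E x)"
    using inj nbrs_subset by (rule inj_on_subset)
  have "image_mset (cref V' E' col' r) (mset_set (nbrs V' E' (f x)))
      = image_mset (cref V' E' col' r \<circ> f) (mset_set (nbrs V E x))"
    using inj_nbrs by (simp add: nbrs image_mset_mset_set[symmetric] multiset.map_comp)
  also have "\<dots> = image_mset (cref V E col r) (mset_set (nbrs V E x))"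
    using Suc.IH nbrs_subset[of V E x] finite_nbrs[OF fin, of E x] by (intro image_mset_cong) auto
  finally show ?case using Suc by simp
qed

lemma WL1_bij_betw:
  assumes fin: "finite V" and bij: "bij_betw f V V'"
    and edge: "\<And>x y. x \<in> V \<Longrightarrow> y \<in> V \<Longrightarrow> E' (f x) (f y) = E x y"
    and col: "\<And>x. x \<in> V \<Longrightarrow> col' (f x) = col x"
  shows "WL1 V' E' col' = WL1 V E col"
proof -
  have V': "V' = f ` V" and inj: "inj_on f V" using bij by (auto simp: bij_betw_def)
  have "WL1 V' E' col' = image_mset (cref V' E' col' (card V) \<circ> f) (mset_set V)"
    unfolding WL1_def V' using inj by (simp add: image_mset_mset_set[symmetric] card_image multiset.map_comp)
  also have "\<dots> = WL1 V E col"
    unfolding WL1_def using cref_bij_betw[of V f V' E' E col' col, OF fin bij edge col] fin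
    by (intro image_mset_cong) auto
  finally show ?thesis .
qed

text \<open>Colour refinement on a quotient: \<open>cc k\<close> is the initial colour of class \<open>k\<close> and \<open>Q k\<close>
  the multiset of classes of the neighbours of any vertex of class \<open>k\<close>.\<close>

fun cref_quot :: "('k \<Rightarrow> 'c) \<Rightarrow> ('k \<Rightarrow> 'k multiset) \<Rightarrow> nat \<Rightarrow> 'k \<Rightarrow> 'c crcol" where
  "cref_quot cc Q 0 k = C0 (cc k)"
| "cref_quot cc Q (Suc r) k = CS (cref_quot cc Q r k) (image_mset (cref_quot cc Q r) (Q k))"

lemma cref_eq_cref_quot:
  assumes fin: "finite V"
    and col: "\<And>x. x \<in> V \<Longrightarrow> col x = cc (cls x)"
    and Q: "\<And>x. x \<in> V \<Longrightarrow> image_mset cls (mset_set (nbrs V E x)) = Q (cls x)"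
    and x: "x \<in> V"
  shows "cref V E col r x = cref_quot cc Q r (cls x)"
  using x
proof (induction r arbitrary: x)
  case 0
  then show ?case using col by simp
next
  case (Suc r)
  have "image_mset (cref V E col r) (mset_set (nbrs V E x))
      = image_mset (cref_quot cc Q r \<circ> cls) (mset_set (nbrs V E x))"
    using Suc.IH nbrs_subset[of V E x] finite_nbrs[OF fin, of E x] by (intro image_mset_cong) auto
  also have "\<dots> = image_mset (cref_quot cc Q r) (Q (cls x))"
    by (simp add: multiset.map_comp[symmetric] Q[OF Suc.prems])
  finally show ?case using Suc by simp
qed

text \<open>The walk invariant on a quotient: \<open>W k k' \<rho>\<close> is the walk vector between vertices of classes
  \<open>k\<close>, \<open>k'\<close> standing in relation \<open>\<rho>\<close> (\<open>\<rho>0\<close> being the relation of a vertex to itself), and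
  \<open>Q k\<close> the multiset of (class, relation) pairs seen from a vertex of class \<open>k\<close>.\<close>

fun omega_quot :: "('k \<Rightarrow> 'k \<Rightarrow> 'r \<Rightarrow> nat list) \<Rightarrow> ('k \<Rightarrow> ('k \<times> 'r) multiset) \<Rightarrow> 'r \<Rightarrow> nat \<Rightarrow> 'k \<Rightarrow> winv" where
  "omega_quot W Q \<rho>0 0 k = W0 (W k k \<rho>0)"
| "omega_quot W Q \<rho>0 (Suc r) k =
     WS (omega_quot W Q \<rho>0 r k) (image_mset (\<lambda>(k', \<rho>). (W k k' \<rho>, omega_quot W Q \<rho>0 r k')) (Q k))"

lemma omega_eq_omega_quot:
  assumes fin: "finite V"
    and W: "\<And>x y. x \<in> V \<Longrightarrow> y \<in> V \<Longrightarrow> wstar V E x y = W (cls x) (cls y) (rel x y)"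
    and rel_refl: "\<And>x. rel x x = \<rho>0"
    and Q: "\<And>x. x \<in> V \<Longrightarrow> image_mset (\<lambda>y. (cls y, rel x y)) (mset_set V) = Q (cls x)"
    and x: "x \<in> V"
  shows "omega V E r x = omega_quot W Q \<rho>0 r (cls x)"
  using x
proof (induction r arbitrary: x)
  case 0
  then show ?case using W rel_refl by simp
next
  case (Suc r)
  have "image_mset (\<lambda>y. (wstar V E x y, omega V E r y)) (mset_set V)
      = image_mset ((\<lambda>(k', \<rho>). (W (cls x) k' \<rho>, omega_quot W Q \<rho>0 r k')) \<circ> (\<lambda>y. (cls y, rel x y))) (mset_set V)"
    using Suc W fin by (intro image_mset_cong) auto
  also have "\<dots> = image_mset (\<lambda>(k', \<rho>). (W (cls x) k' \<rho>, omega_quot W Q \<rho>0 r k')) (Q (cls x))"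
    by (simp add: multiset.map_comp[symmetric] Q[OF Suc.prems])
  finally show ?case using Suc by simp
qed

definition adjrel :: "('a \<Rightarrow> 'a \<Rightarrow> bool) \<Rightarrow> 'a \<Rightarrow> 'a \<Rightarrow> nat" where
  "adjrel E x y = (if x = y then 0 else if E x y then 1 else 2)"

lemma adjrel_refl [simp]: "adjrel E x x = 0"
  by (simp add: adjrel_def)

lemma adjrel_eq_0_iff [simp]: "adjrel E x y = 0 \<longleftrightarrow> x = y"
  by (simp add: adjrel_def)

lemma adjrel_cases: "adjrel E x y = 0 \<or> adjrel E x y = 1 \<or> adjrel E x y = 2"
  by (auto simp: adjrel_def)

definition adjrel_profile :: "nat \<Rightarrow> nat \<Rightarrow> nat multiset" where
  "adjrel_profile n d = {#0#} + replicate_mset d 1 + replicate_mset (n - 1 - d) 2"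

text \<open>The intersection numbers of a strongly regular graph: for vertices \<open>a\<close>, \<open>u\<close> in relation
  \<open>t\<close>, \<open>isect_count n d lam mu t (i, j)\<close> is the number of \<open>w\<close> with
  \<open>adjrel E w a = i\<close> and \<open>adjrel E w u = j\<close>.\<close>

definition isect_adj :: "nat \<Rightarrow> nat \<Rightarrow> nat \<Rightarrow> nat \<Rightarrow> nat" where
  "isect_adj d lam mu t = (if t = 0 then d else if t = 1 then lam else mu)"

definition isect_mixed :: "nat \<Rightarrow> nat \<Rightarrow> nat \<Rightarrow> nat \<Rightarrow> nat" where
  "isect_mixed d lam mu t = (if t = 0 then 0 else if t = 1 then d - lam - 1 else d - mu)"

definition isect_count :: "nat \<Rightarrow> nat \<Rightarrow> nat \<Rightarrow> nat \<Rightarrow> nat \<Rightarrow> nat \<times> nat \<Rightarrow> nat" where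
  "isect_count n d lam mu t p = (case p of (i, j) \<Rightarrow>
     if i = 0 then of_bool (t = j)
     else if j = 0 then of_bool (t = i)
     else if i = 1 \<and> j = 1 then isect_adj d lam mu t
     else if i = 1 \<and> j = 2 \<or> i = 2 \<and> j = 1 then isect_mixed d lam mu t
     else if i = 2 \<and> j = 2 then
       n - (1 + of_bool (t \<noteq> 0) + isect_adj d lam mu t + 2 * isect_mixed d lam mu t)
     else 0)"

definition isect_profile :: "nat \<Rightarrow> nat \<Rightarrow> nat \<Rightarrow> nat \<Rightarrow> nat \<Rightarrow> (nat \<times> nat) multiset" where
  "isect_profile n d lam mu t = (\<Sum>p\<in>{0,1,2}\<times>{0,1,2}. replicate_mset (isect_count n d lam mu t p) p)"

locale srg =
  fixes V :: "'a set" and E :: "'a \<Rightarrow> 'a \<Rightarrow> bool" and n d lam mu :: nat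
  assumes strongly_regular: "strongly_regular V E n d lam mu"
begin

lemma simple_graph: "simple_graph V E"
  using strongly_regular by (simp add: strongly_regular_def)

lemma finite_V: "finite V"
  using simple_graph by (simp add: simple_graph_def)

lemma edge_sym: "E x y \<Longrightarrow> E y x"
  using simple_graph by (simp add: simple_graph_def)

lemma edge_irrefl: "\<not> E x x"
  using simple_graph by (simp add: simple_graph_def)

lemma edge_in_V: "E x y \<Longrightarrow> x \<in> V \<and> y \<in> V"
  using simple_graph by (simp add: simple_graph_def)

lemma card_V: "card V = n"
  using strongly_regular by (simp add: strongly_regular_def)

lemma card_nbrs: "u \<in> V \<Longrightarrow> card (nbrs V E u) = d"
  using strongly_regular by (simp add: strongly_regular_def)

lemma card_common_nbrs_adj: "u \<in> V \<Longrightarrow> v \<in> V \<Longrightarrow> E u v \<Longrightarrow> card (nbrs V E u \<inter> nbrs V E v) = lam"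
  using strongly_regular by (simp add: strongly_regular_def)

lemma card_common_nbrs_nonadj:
  "u \<in> V \<Longrightarrow> v \<in> V \<Longrightarrow> u \<noteq> v \<Longrightarrow> \<not> E u v \<Longrightarrow> card (nbrs V E u \<inter> nbrs V E v) = mu"
  using strongly_regular by (simp add: strongly_regular_def)

lemma edge_commute: "E x y = E y x"
  using edge_sym by blast

lemma adjrel_commute: "adjrel E x y = adjrel E y x"
  by (auto simp: adjrel_def edge_commute)

lemma finite_nbrs: "finite (nbrs V E u)"
  using finite_V by (rule finite_nbrs)

lemma card_nbrs_adj_to:
  assumes "u \<in> V" "v \<in> V"
  shows "card {w\<in>nbrs V E u. E w v} = (if u = v then d else if E u v then lam else mu)"
proof -
  have "{w\<in>nbrs V E u. E w v} = nbrs V E u \<inter> nbrs V E v"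
    by (auto simp: nbrs_def edge_commute)
  then show ?thesis
    using assms card_nbrs card_common_nbrs_adj card_common_nbrs_nonadj by auto
qed

lemma card_nbrs_nonadj_to:
  assumes uv: "u \<in> V" "v \<in> V"
  shows "card {w\<in>nbrs V E u. w \<noteq> v \<and> \<not> E w v}
    = (if u = v then 0 else if E u v then d - lam - 1 else d - mu)"
proof -
  let ?adj = "{w\<in>nbrs V E u. E w v}" and ?eq = "{w\<in>nbrs V E u. w = v}"
  have fin: "finite (?adj \<union> ?eq)" and sub: "?adj \<union> ?eq \<subseteq> nbrs V E u"
    using finite_nbrs by auto
  have "card {w\<in>nbrs V E u. w \<noteq> v \<and> \<not> E w v} = card (nbrs V E u - (?adj \<union> ?eq))"
    by (rule arg_cong[where f = card]) auto
  also have "\<dots> = d - card (?adj \<union> ?eq)"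
    using card_Diff_subset[OF fin sub] card_nbrs[OF uv(1)] by simp
  also have "card (?adj \<union> ?eq) = card ?adj + card ?eq"
    using finite_nbrs edge_irrefl by (intro card_Un_disjoint) auto
  also have "?eq = (if E u v then {v} else {})"
    using uv(2) by (auto simp: nbrs_def)
  finally show ?thesis
    using card_nbrs_adj_to[OF uv] edge_irrefl by auto
qed

lemma dist_le_2:
  assumes mu: "0 < mu" and x: "x \<in> V" and u: "u \<in> V"
  shows "u = x \<or> E x u \<or> (\<exists>w. E x w \<and> E w u)"
proof (cases "u = x \<or> E x u")
  case False
  then have "card (nbrs V E x \<inter> nbrs V E u) = mu"
    using card_common_nbrs_nonadj[OF x u] by auto
  then have "nbrs V E x \<inter> nbrs V E u \<noteq> {}"
    using mu by auto
  then obtain w where "E x w" "E u w"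
    by (auto simp: nbrs_def)
  then show ?thesis using edge_sym by blast
qed blast

lemma degree_pos:
  assumes mu: "0 < mu" and n: "2 \<le> n" and a: "a \<in> V"
  shows "1 \<le> d"
proof -
  have "\<not> V \<subseteq> {a}"
    using card_mono[of "{a}" V] n card_V by auto
  then obtain u where u: "u \<in> V" "u \<noteq> a" by auto
  then obtain w where "E a w"
    using dist_le_2[OF mu a u(1)] by blast
  then have "nbrs V E a \<noteq> {}" using edge_in_V by (auto simp: nbrs_def)
  then have "0 < card (nbrs V E a)" using finite_nbrs by (simp add: card_gt_0_iff)
  then show ?thesis using card_nbrs[OF a] by simp
qed

lemma image_mset_adjrel:
  assumes a: "a \<in> V"
  shows "image_mset (\<lambda>w. adjrel E w a) (mset_set V) = adjrel_profile n d"
proof -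
  have R: "(\<lambda>w. adjrel E w a) ` V \<subseteq> {0,1,2}" by (auto simp: adjrel_def)
  have "{w\<in>V. adjrel E w a = 0} = {a}"
    using a by auto
  then have c0: "card {w\<in>V. adjrel E w a = 0} = 1"
    by simp
  have "{w\<in>V. adjrel E w a = 1} = nbrs V E a"
    using edge_irrefl by (auto simp: adjrel_def nbrs_def edge_commute)
  then have c1: "card {w\<in>V. adjrel E w a = 1} = d"
    using card_nbrs[OF a] by simp
  have "(\<Sum>p\<in>{0,1,2}. card {w\<in>V. adjrel E w a = p}) = n"
    using sum_card_fibres[OF finite_V _ R] card_V by simp
  then have c2: "card {w\<in>V. adjrel E w a = 2} = n - 1 - d"
    using c0 c1 by simp
  show ?thesis
    using image_mset_mset_set_fibres[OF finite_V _ R] c0 c1 c2 by (simp add: adjrel_profile_def)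
qed

lemma card_adjrel_cell:
  assumes a: "a \<in> V" and u: "u \<in> V"
    and p: "p \<in> {0,1,2} \<times> {0,1,2}" "p \<noteq> (2,2)"
  shows "card {w\<in>V. (adjrel E w a, adjrel E w u) = p} = isect_count n d lam mu (adjrel E u a) p"
proof -
  obtain i j where ij: "p = (i, j)" by (cases p)
  consider "i = 0" | "i \<noteq> 0" "j = 0" | "i = 1" "j = 1" | "i = 1" "j = 2" | "i = 2" "j = 1"
    using p ij by auto
  then show ?thesis
  proof cases
    case 1
    then have "{w\<in>V. (adjrel E w a, adjrel E w u) = p} = (if adjrel E a u = j then {a} else {})"
      using a ij by auto
    then show ?thesis using 1 ij by (simp add: isect_count_def adjrel_commute)
  next
    case 2
    then have "{w\<in>V. (adjrel E w a, adjrel E w u) = p} = (if adjrel E u a = i then {u} else {})"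
      using u ij by auto
    then show ?thesis using 2 ij by (simp add: isect_count_def)
  next
    case 3
    then have "{w\<in>V. (adjrel E w a, adjrel E w u) = p} = {w\<in>nbrs V E a. E w u}"
      using ij edge_irrefl by (auto simp: adjrel_def nbrs_def edge_commute)
    then show ?thesis
      using 3 ij card_nbrs_adj_to[OF a u]
      by (auto simp: isect_count_def isect_adj_def adjrel_def edge_commute)
  next
    case 4
    then have "{w\<in>V. (adjrel E w a, adjrel E w u) = p} = {w\<in>nbrs V E a. w \<noteq> u \<and> \<not> E w u}"
      using ij edge_irrefl by (auto simp: adjrel_def nbrs_def edge_commute)
    then show ?thesis
      using 4 ij card_nbrs_nonadj_to[OF a u]
      by (auto simp: isect_count_def isect_mixed_def adjrel_def edge_commute)
  next
    case 5
    then have "{w\<in>V. (adjrel E w a, adjrel E w u) = p} = {w\<in>nbrs V E u. w \<noteq> a \<and> \<not> E w a}"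
      using ij edge_irrefl by (auto simp: adjrel_def nbrs_def edge_commute)
    then show ?thesis
      using 5 ij card_nbrs_nonadj_to[OF u a]
      by (auto simp: isect_count_def isect_mixed_def adjrel_def edge_commute)
  qed
qed

text \<open>The remaining cell \<open>(2, 2)\<close> is the complement of the others.\<close>

lemma image_mset_adjrel_pair:
  assumes a: "a \<in> V" and u: "u \<in> V"
  shows "image_mset (\<lambda>w. (adjrel E w a, adjrel E w u)) (mset_set V)
    = isect_profile n d lam mu (adjrel E u a)"
proof -
  let ?f = "\<lambda>w. (adjrel E w a, adjrel E w u)" and ?t = "adjrel E u a"
  let ?R = "{0::nat,1,2} \<times> {0::nat,1,2}"
  let ?cell = "\<lambda>p. card {w\<in>V. ?f w = p}"
  have finite_R: "finite ?R" by simp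
  have R: "?f ` V \<subseteq> ?R" by (rule image_subsetI) (simp add: adjrel_def)
  have others: "?R - {(2,2)} = {(0,0),(0,1),(0,2),(1,0),(2,0),(1,1),(1,2),(2,1)}" by auto
  have "n = (\<Sum>p\<in>?R. ?cell p)"
    using sum_card_fibres[OF finite_V finite_R R] card_V by simp
  also have "\<dots> = ?cell (2,2) + (\<Sum>p\<in>?R - {(2,2)}. ?cell p)"
    by (rule sum.remove) auto
  also have "(\<Sum>p\<in>?R - {(2,2)}. ?cell p) = (\<Sum>p\<in>?R - {(2,2)}. isect_count n d lam mu ?t p)"
    using card_adjrel_cell[OF a u] by (intro sum.cong) auto
  also have "\<dots> = 1 + of_bool (?t \<noteq> 0) + isect_adj d lam mu ?t + 2 * isect_mixed d lam mu ?t"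
    unfolding others using adjrel_cases[of E u a] by (auto simp: isect_count_def)
  finally have cell22: "?cell (2,2) = isect_count n d lam mu ?t (2,2)"
    by (simp add: isect_count_def)
  have "?cell p = isect_count n d lam mu ?t p" if "p \<in> ?R" for p
    using card_adjrel_cell[OF a u that] cell22 by (cases "p = (2,2)") auto
  then show ?thesis
    unfolding image_mset_mset_set_fibres[OF finite_V finite_R R] isect_profile_def
    by (intro sum.cong) auto
qed

end

lemma finite_constr_V: "finite VA \<Longrightarrow> finite VB \<Longrightarrow> finite (constr_V VA VB)"
  by (simp add: constr_V_def)

lemma mset_set_constr_V:
  assumes "finite VA" "finite VB"
  shows "mset_set (constr_V VA VB)
    = image_mset InA (mset_set VA) + image_mset InB (mset_set VB) + {#Conn, Pend#}"
proof -
  have "mset_set (constr_V VA VB) = mset_set (InA ` VA \<union> InB ` VB) + mset_set {Conn, Pend}"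
    unfolding constr_V_def using assms by (intro mset_set_Union) auto
  also have "mset_set (InA ` VA \<union> InB ` VB) = mset_set (InA ` VA) + mset_set (InB ` VB)"
    using assms by (intro mset_set_Union) auto
  also have "mset_set (InA ` VA) = image_mset InA (mset_set VA)"
    by (rule image_mset_mset_set[symmetric]) (auto simp: inj_on_def)
  also have "mset_set (InB ` VB) = image_mset InB (mset_set VB)"
    by (rule image_mset_mset_set[symmetric]) (auto simp: inj_on_def)
  finally show ?thesis by simp
qed

lemma card_constr_V:
  assumes "finite VA" "finite VB"
  shows "card (constr_V VA VB) = card VA + card VB + 2"
  using arg_cong[OF mset_set_constr_V[OF assms], of size] by simp

lemma constr_V_cases:
  assumes "x \<in> constr_V VA VB"
  obtains u where "u \<in> VA" "x = InA u" | u where "u \<in> VB" "x = InB u" | "x = Conn" | "x = Pend"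
  using assms by (auto simp: constr_V_def)

locale srg_pair = A: srg VA EA n d lam mu + B: srg VB EB n d lam mu
  for VA :: "'a set" and EA and VB :: "'b set" and EB and n d lam mu +
  fixes a1 :: 'a and b1 :: 'b
  assumes a1_in_VA: "a1 \<in> VA" and b1_in_VB: "b1 \<in> VB"
begin

abbreviation V :: "('a, 'b) gvert set" where "V \<equiv> constr_V VA VB"
abbreviation EG :: "('a, 'b) gvert \<Rightarrow> ('a, 'b) gvert \<Rightarrow> bool" where "EG \<equiv> constr_E EA EB a1 b1"

lemma finite_V: "finite V"
  using A.finite_V B.finite_V by (rule finite_constr_V)

lemma card_V: "card V = 2 * n + 2"
  using card_constr_V[OF A.finite_V B.finite_V] A.card_V B.card_V by simp

lemmas mset_set_V = mset_set_constr_V[OF A.finite_V B.finite_V]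

lemma EG_irrefl: "\<not> EG x x"
  using A.edge_irrefl B.edge_irrefl by (cases x) auto

lemma nbrs_InA: "nbrs V EG (InA u) = InA ` nbrs VA EA u \<union> (if u = a1 then {Conn} else {})"
  using A.edge_in_V a1_in_VA by (auto simp: nbrs_def constr_V_def elim: constr_E.elims)

lemma nbrs_InB: "nbrs V EG (InB u) = InB ` nbrs VB EB u \<union> (if u = b1 then {Conn} else {})"
  using B.edge_in_V b1_in_VB by (auto simp: nbrs_def constr_V_def elim: constr_E.elims)

lemma nbrs_Conn: "nbrs V EG Conn = {InA a1, InB b1, Pend}"
  using a1_in_VA b1_in_VB by (auto simp: nbrs_def constr_V_def elim: constr_E.elims)

lemma nbrs_Pend: "nbrs V EG Pend = {Conn}"
  by (auto simp: nbrs_def constr_V_def elim: constr_E.elims)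

lemma sum_nbrs_InA:
  "(\<Sum>z\<in>nbrs V EG (InA u). f z) = (\<Sum>w\<in>nbrs VA EA u. f (InA w)) + (if u = a1 then f Conn else 0)"
proof -
  have "(\<Sum>z\<in>nbrs V EG (InA u). f z) = (\<Sum>z\<in>InA ` nbrs VA EA u. f z) + (if u = a1 then f Conn else 0)"
    unfolding nbrs_InA using A.finite_nbrs by (subst sum.union_disjoint) auto
  also have "(\<Sum>z\<in>InA ` nbrs VA EA u. f z) = (\<Sum>w\<in>nbrs VA EA u. f (InA w))"
    by (rule sum.reindex_cong[where l = InA]) (auto simp: inj_on_def)
  finally show ?thesis .
qed

lemma sum_nbrs_InB:
  "(\<Sum>z\<in>nbrs V EG (InB u). f z) = (\<Sum>w\<in>nbrs VB EB u. f (InB w)) + (if u = b1 then f Conn else 0)"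
proof -
  have "(\<Sum>z\<in>nbrs V EG (InB u). f z) = (\<Sum>z\<in>InB ` nbrs VB EB u. f z) + (if u = b1 then f Conn else 0)"
    unfolding nbrs_InB using B.finite_nbrs by (subst sum.union_disjoint) auto
  also have "(\<Sum>z\<in>InB ` nbrs VB EB u. f z) = (\<Sum>w\<in>nbrs VB EB u. f (InB w))"
    by (rule sum.reindex_cong[where l = InB]) (auto simp: inj_on_def)
  finally show ?thesis .
qed

lemma sum_nbrs_Conn: "(\<Sum>z\<in>nbrs V EG Conn. f z) = f (InA a1) + f (InB b1) + f Pend"
  unfolding nbrs_Conn by (simp add: add.assoc)

lemma sum_nbrs_Pend: "(\<Sum>z\<in>nbrs V EG Pend. f z) = f Conn"
  unfolding nbrs_Pend by simp

end

section \<open>The walk invariants of \<open>G(A', B')\<close> factor through vertex classes\<close>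

context srg
begin

lemma sum_nbrs_eq: "v \<in> V \<Longrightarrow> (\<Sum>w\<in>nbrs V E u. of_bool (w = v) :: nat) = of_bool (E u v)"
  using finite_nbrs by (simp add: nbrs_def)

lemma sum_nbrs_adj:
  "u \<in> V \<Longrightarrow> v \<in> V \<Longrightarrow>
    (\<Sum>w\<in>nbrs V E u. of_bool (E w v) :: nat) = (if u = v then d else if E u v then lam else mu)"
  using card_nbrs_adj_to finite_nbrs by (simp add: Int_def conj_commute)

lemma sum_nbrs_adj_ne:
  assumes "u \<in> V" "v \<in> V"
  shows "(\<Sum>w\<in>nbrs V E u. of_bool (w \<noteq> v \<and> E w v) :: nat) = (if u = v then d else if E u v then lam else mu)"
proof -
  have "(\<Sum>w\<in>nbrs V E u. of_bool (w \<noteq> v \<and> E w v) :: nat) = (\<Sum>w\<in>nbrs V E u. of_bool (E w v))"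
    using edge_irrefl by (intro sum.cong) auto
  then show ?thesis using sum_nbrs_adj[OF assms] by simp
qed

lemma sum_nbrs_nonadj:
  "u \<in> V \<Longrightarrow> v \<in> V \<Longrightarrow> (\<Sum>w\<in>nbrs V E u. of_bool (w \<noteq> v \<and> \<not> E w v) :: nat)
    = (if u = v then 0 else if E u v then d - lam - 1 else d - mu)"
  using card_nbrs_nonadj_to finite_nbrs by (simp add: Int_def conj_commute)

end

text \<open>Vertex classes of \<open>G(A', B')\<close>: \<open>Ai\<close> (resp. \<open>Bi\<close>) is a vertex of \<open>A\<close> (resp. \<open>B\<close>) whose relation to
  \<open>a1\<close> (resp. \<open>b1\<close>), in the sense of \<open>adjrel\<close>, is \<open>i\<close>; \<open>CC\<close> is the connecting vertex and \<open>PP\<close> the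
  pendant vertex.\<close>

datatype vclass = A0 | A1 | A2 | B0 | B1 | B2 | CC | PP

fun aclass :: "nat \<Rightarrow> vclass" where
  "aclass 0 = A0" | "aclass (Suc 0) = A1" | "aclass (Suc (Suc _)) = A2"

fun bclass :: "nat \<Rightarrow> vclass" where
  "bclass 0 = B0" | "bclass (Suc 0) = B1" | "bclass (Suc (Suc _)) = B2"

lemma aclass_2 [simp]: "aclass 2 = A2" and bclass_2 [simp]: "bclass 2 = B2"
  by (simp_all add: numeral_2_eq_2)

lemma aclass_adjrel [simp]:
  "aclass (adjrel E x y) = A0 \<longleftrightarrow> x = y"
  "aclass (adjrel E x y) = A1 \<longleftrightarrow> x \<noteq> y \<and> E x y"
  "aclass (adjrel E x y) = A2 \<longleftrightarrow> x \<noteq> y \<and> \<not> E x y"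
  "aclass r \<noteq> B0" "aclass r \<noteq> B1" "aclass r \<noteq> B2" "aclass r \<noteq> CC" "aclass r \<noteq> PP"
  by (auto simp: adjrel_def elim: aclass.elims)

lemma bclass_adjrel [simp]:
  "bclass (adjrel E x y) = B0 \<longleftrightarrow> x = y"
  "bclass (adjrel E x y) = B1 \<longleftrightarrow> x \<noteq> y \<and> E x y"
  "bclass (adjrel E x y) = B2 \<longleftrightarrow> x \<noteq> y \<and> \<not> E x y"
  "bclass r \<noteq> A0" "bclass r \<noteq> A1" "bclass r \<noteq> A2" "bclass r \<noteq> CC" "bclass r \<noteq> PP"
  by (auto simp: adjrel_def elim: bclass.elims)

fun same_side :: "('a, 'b) gvert \<Rightarrow> ('a, 'b) gvert \<Rightarrow> bool" where
  "same_side (InA _) (InA _) = True"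
| "same_side (InB _) (InB _) = True"
| "same_side _ _ = False"

text \<open>For a fixed target \<open>y\<close>, the functions \<open>basis_fn y i\<close> span a space of functions on \<open>V\<close> that is
  invariant under the adjacency operator: this is the strong regularity of the two halves, plus
  indicator functions of the vertex classes to absorb the connecting vertex.\<close>

datatype basis_idx = Diag | Adj | NonAdj | Cls vclass

definition basis_idxs :: "basis_idx set" where
  "basis_idxs = {Diag, Adj, NonAdj, Cls A0, Cls A1, Cls A2, Cls B0, Cls B1, Cls B2, Cls CC, Cls PP}"

definition side_class :: "vclass \<Rightarrow> bool" where
  "side_class c \<longleftrightarrow> c \<noteq> CC \<and> c \<noteq> PP"

text \<open>The matrix of the adjacency operator on the basis; it depends on the target only through its class.\<close>

fun basis_step :: "nat \<Rightarrow> nat \<Rightarrow> nat \<Rightarrow> vclass \<Rightarrow> basis_idx \<Rightarrow> basis_idx \<Rightarrow> nat" where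
  "basis_step d lam mu cy Diag j = (if j = Adj then 1
      else if j = Cls CC then of_bool (cy = A0 \<or> cy = B0 \<or> cy = PP)
      else if j = Cls A0 \<or> j = Cls B0 \<or> j = Cls PP then of_bool (cy = CC) else 0)"
| "basis_step d lam mu cy Adj j =
     (if side_class cy then (if j = Diag then d else if j = Adj then lam else if j = NonAdj then mu else 0) else 0)
      + of_bool (j = Cls CC \<and> (cy = A1 \<or> cy = B1))"
| "basis_step d lam mu cy NonAdj j =
     (if side_class cy then (if j = Adj then d - lam - 1 else if j = NonAdj then d - mu else 0) else 0)
      + of_bool (j = Cls CC \<and> (cy = A2 \<or> cy = B2))"
| "basis_step d lam mu cy (Cls A0) j = of_bool (j = Cls A1 \<or> j = Cls CC)"
| "basis_step d lam mu cy (Cls A1) j = (if j = Cls A0 then d else if j = Cls A1 then lam else if j = Cls A2 then mu else 0)"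
| "basis_step d lam mu cy (Cls A2) j = (if j = Cls A1 then d - lam - 1 else if j = Cls A2 then d - mu else 0)"
| "basis_step d lam mu cy (Cls B0) j = of_bool (j = Cls B1 \<or> j = Cls CC)"
| "basis_step d lam mu cy (Cls B1) j = (if j = Cls B0 then d else if j = Cls B1 then lam else if j = Cls B2 then mu else 0)"
| "basis_step d lam mu cy (Cls B2) j = (if j = Cls B1 then d - lam - 1 else if j = Cls B2 then d - mu else 0)"
| "basis_step d lam mu cy (Cls CC) j = of_bool (j = Cls A0 \<or> j = Cls B0 \<or> j = Cls PP)"
| "basis_step d lam mu cy (Cls PP) j = of_bool (j = Cls CC)"

fun walk_coef :: "nat \<Rightarrow> nat \<Rightarrow> nat \<Rightarrow> nat \<Rightarrow> vclass \<Rightarrow> basis_idx \<Rightarrow> nat" where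
  "walk_coef d lam mu 0 cy j = of_bool (j = Diag)"
| "walk_coef d lam mu (Suc k) cy j = (\<Sum>i\<in>basis_idxs. walk_coef d lam mu k cy i * basis_step d lam mu cy i j)"

context srg_pair
begin

fun vclass_of :: "('a, 'b) gvert \<Rightarrow> vclass" where
  "vclass_of (InA u) = aclass (adjrel EA u a1)"
| "vclass_of (InB u) = bclass (adjrel EB u b1)"
| "vclass_of Conn = CC"
| "vclass_of Pend = PP"

fun basis_fn :: "('a, 'b) gvert \<Rightarrow> basis_idx \<Rightarrow> ('a, 'b) gvert \<Rightarrow> nat" where
  "basis_fn y Diag x = of_bool (x = y)"
| "basis_fn y Adj x = of_bool (same_side x y \<and> EG x y)"
| "basis_fn y NonAdj x = of_bool (same_side x y \<and> x \<noteq> y \<and> \<not> EG x y)"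
| "basis_fn y (Cls k) x = of_bool (vclass_of x = k)"

lemmas basis_simps = side_class_def basis_idxs_def a1_in_VA b1_in_VB A.edge_irrefl B.edge_irrefl
  A.sum_nbrs_eq A.sum_nbrs_adj A.sum_nbrs_adj_ne A.sum_nbrs_nonadj
  B.sum_nbrs_eq B.sum_nbrs_adj B.sum_nbrs_adj_ne B.sum_nbrs_nonadj

lemma sum_nbrs_InA_basis_fn:
  "u \<in> VA \<Longrightarrow> y \<in> V \<Longrightarrow> i \<in> basis_idxs \<Longrightarrow>
  (\<Sum>z\<in>nbrs V EG (InA u). basis_fn y i z) = (\<Sum>j\<in>basis_idxs. basis_step d lam mu (vclass_of y) i j * basis_fn y j (InA u))"
  apply (simp only: sum_nbrs_InA)
  apply (cases y; simp only: basis_idxs_def constr_V_def; elim disjE insertE; simp add: basis_simps del: sum_of_bool_eq)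
  apply (auto simp: basis_simps simp del: sum_of_bool_eq)
  done

lemma sum_nbrs_InB_basis_fn:
  "u \<in> VB \<Longrightarrow> y \<in> V \<Longrightarrow> i \<in> basis_idxs \<Longrightarrow>
  (\<Sum>z\<in>nbrs V EG (InB u). basis_fn y i z) = (\<Sum>j\<in>basis_idxs. basis_step d lam mu (vclass_of y) i j * basis_fn y j (InB u))"
  apply (simp only: sum_nbrs_InB)
  apply (cases y; simp only: basis_idxs_def constr_V_def; elim disjE insertE; simp add: basis_simps del: sum_of_bool_eq)
  apply (auto simp: basis_simps simp del: sum_of_bool_eq)
  done

lemma sum_nbrs_Conn_basis_fn:
  "y \<in> V \<Longrightarrow> i \<in> basis_idxs \<Longrightarrow>
  (\<Sum>z\<in>nbrs V EG Conn. basis_fn y i z) = (\<Sum>j\<in>basis_idxs. basis_step d lam mu (vclass_of y) i j * basis_fn y j Conn)"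
  apply (simp only: sum_nbrs_Conn)
  apply (cases y; simp only: basis_idxs_def constr_V_def; elim disjE insertE;
      simp add: basis_simps A.edge_commute[of a1] B.edge_commute[of b1] del: sum_of_bool_eq)
  done

lemma sum_nbrs_Pend_basis_fn:
  "y \<in> V \<Longrightarrow> i \<in> basis_idxs \<Longrightarrow>
  (\<Sum>z\<in>nbrs V EG Pend. basis_fn y i z) = (\<Sum>j\<in>basis_idxs. basis_step d lam mu (vclass_of y) i j * basis_fn y j Pend)"
  apply (simp only: sum_nbrs_Pend)
  apply (cases y; simp only: basis_idxs_def constr_V_def; elim disjE insertE;
      simp add: basis_simps A.edge_commute[of a1] B.edge_commute[of b1] del: sum_of_bool_eq)
  done

lemma sum_nbrs_basis_fn:
  assumes "x \<in> V" "y \<in> V" "i \<in> basis_idxs"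
  shows "(\<Sum>z\<in>nbrs V EG x. basis_fn y i z)
    = (\<Sum>j\<in>basis_idxs. basis_step d lam mu (vclass_of y) i j * basis_fn y j x)"
  using assms(1) by (cases rule: constr_V_cases)
    (simp_all add: assms(2,3) sum_nbrs_InA_basis_fn sum_nbrs_InB_basis_fn sum_nbrs_Conn_basis_fn
      sum_nbrs_Pend_basis_fn)

lemma walks_eq_basis_sum:
  assumes "x \<in> V" "y \<in> V"
  shows "walks V EG k x y = (\<Sum>i\<in>basis_idxs. walk_coef d lam mu k (vclass_of y) i * basis_fn y i x)"
  using assms(1)
proof (induction k arbitrary: x)
  case 0
  then show ?case by (simp add: basis_idxs_def)
next
  case (Suc k)
  let ?c = "walk_coef d lam mu k (vclass_of y)" and ?b = "basis_fn y"
    and ?T = "basis_step d lam mu (vclass_of y)"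
  have "walks V EG (Suc k) x y = (\<Sum>z\<in>nbrs V EG x. \<Sum>i\<in>basis_idxs. ?c i * ?b i z)"
    using Suc.IH nbrs_subset[of V EG x] by (auto intro: sum.cong)
  also have "\<dots> = (\<Sum>i\<in>basis_idxs. ?c i * (\<Sum>z\<in>nbrs V EG x. ?b i z))"
    unfolding sum_distrib_left by (rule sum.swap)
  also have "\<dots> = (\<Sum>i\<in>basis_idxs. ?c i * (\<Sum>j\<in>basis_idxs. ?T i j * ?b j x))"
    using sum_nbrs_basis_fn[OF Suc.prems assms(2)] by (intro sum.cong) auto
  also have "\<dots> = (\<Sum>j\<in>basis_idxs. (\<Sum>i\<in>basis_idxs. ?c i * ?T i j) * ?b j x)"
    unfolding sum_distrib_left sum_distrib_right mult.assoc by (rule sum.swap)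
  finally show ?case by simp
qed

end

definition same_side_class :: "vclass \<Rightarrow> vclass \<Rightarrow> bool" where
  "same_side_class cx cy \<longleftrightarrow> cx \<in> {A0, A1, A2} \<and> cy \<in> {A0, A1, A2} \<or> cx \<in> {B0, B1, B2} \<and> cy \<in> {B0, B1, B2}"

fun basis_fn_quot :: "basis_idx \<Rightarrow> vclass \<Rightarrow> vclass \<Rightarrow> nat \<Rightarrow> nat" where
  "basis_fn_quot Diag cx cy \<rho> = of_bool (\<rho> = 0)"
| "basis_fn_quot Adj cx cy \<rho> = of_bool (same_side_class cx cy \<and> \<rho> = 1)"
| "basis_fn_quot NonAdj cx cy \<rho> = of_bool (same_side_class cx cy \<and> \<rho> = 2)"
| "basis_fn_quot (Cls k) cx cy \<rho> = of_bool (cx = k)"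

definition walks_quot :: "nat \<Rightarrow> nat \<Rightarrow> nat \<Rightarrow> nat \<Rightarrow> vclass \<Rightarrow> vclass \<Rightarrow> nat \<Rightarrow> nat" where
  "walks_quot d lam mu k cx cy \<rho> = (\<Sum>i\<in>basis_idxs. walk_coef d lam mu k cy i * basis_fn_quot i cx cy \<rho>)"

definition wstar_quot :: "nat \<Rightarrow> nat \<Rightarrow> nat \<Rightarrow> nat \<Rightarrow> vclass \<Rightarrow> vclass \<Rightarrow> nat \<Rightarrow> nat list" where
  "wstar_quot N d lam mu cx cy \<rho> = map (\<lambda>k. walks_quot d lam mu k cx cy \<rho>) [0..<N]"

lemma adjrel_constr_E [simp]:
  "adjrel (constr_E EA EB a1 b1) (InA u) (InA u') = adjrel EA u u'"
  "adjrel (constr_E EA EB a1 b1) (InB v) (InB v') = adjrel EB v v'"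
  "adjrel (constr_E EA EB a1 b1) (InA u) (InB v) = 2"
  "adjrel (constr_E EA EB a1 b1) (InB v) (InA u) = 2"
  "adjrel (constr_E EA EB a1 b1) (InA u) Conn = (if u = a1 then 1 else 2)"
  "adjrel (constr_E EA EB a1 b1) (InB v) Conn = (if v = b1 then 1 else 2)"
  "adjrel (constr_E EA EB a1 b1) Conn (InA u) = (if u = a1 then 1 else 2)"
  "adjrel (constr_E EA EB a1 b1) Conn (InB v) = (if v = b1 then 1 else 2)"
  "adjrel (constr_E EA EB a1 b1) (InA u) Pend = 2"
  "adjrel (constr_E EA EB a1 b1) (InB v) Pend = 2"
  "adjrel (constr_E EA EB a1 b1) Pend (InA u) = 2"
  "adjrel (constr_E EA EB a1 b1) Pend (InB v) = 2"
  "adjrel (constr_E EA EB a1 b1) Conn Pend = 1"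
  "adjrel (constr_E EA EB a1 b1) Pend Conn = 1"
  by (auto simp: adjrel_def)

context srg_pair
begin

lemma basis_fn_eq_quot:
  assumes "x \<in> V" "y \<in> V"
  shows "basis_fn y i x = basis_fn_quot i (vclass_of x) (vclass_of y) (adjrel EG x y)"
  using assms EG_irrefl[of x] A.edge_irrefl B.edge_irrefl
  by (cases i; cases x; cases y) (simp_all add: adjrel_def same_side_class_def constr_V_def)

lemma walks_eq_walks_quot:
  "x \<in> V \<Longrightarrow> y \<in> V \<Longrightarrow> walks V EG k x y = walks_quot d lam mu k (vclass_of x) (vclass_of y) (adjrel EG x y)"
  unfolding walks_eq_basis_sum walks_quot_def using basis_fn_eq_quot by (intro sum.cong) auto

lemma wstar_eq_wstar_quot:
  "x \<in> V \<Longrightarrow> y \<in> V \<Longrightarrow> wstar V EG x y = wstar_quot (2 * n + 2) d lam mu (vclass_of x) (vclass_of y) (adjrel EG x y)"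
  unfolding wstar_def wstar_quot_def card_V using walks_eq_walks_quot by simp

end

text \<open>The multiset of pairs (class of \<open>y\<close>, relation of \<open>x\<close> to \<open>y\<close>) over all \<open>y\<close>, for \<open>x\<close> of a given class.\<close>

definition rel_profile_A :: "nat \<Rightarrow> nat \<Rightarrow> nat \<Rightarrow> nat \<Rightarrow> nat \<Rightarrow> (vclass \<times> nat) multiset" where
  "rel_profile_A n d lam mu t = image_mset (\<lambda>(i, j). (aclass i, j)) (isect_profile n d lam mu t)
     + image_mset (\<lambda>i. (bclass i, 2)) (adjrel_profile n d) + {#(CC, if t = 0 then 1 else 2), (PP, 2)#}"

definition rel_profile_B :: "nat \<Rightarrow> nat \<Rightarrow> nat \<Rightarrow> nat \<Rightarrow> nat \<Rightarrow> (vclass \<times> nat) multiset" where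
  "rel_profile_B n d lam mu t = image_mset (\<lambda>(i, j). (bclass i, j)) (isect_profile n d lam mu t)
     + image_mset (\<lambda>i. (aclass i, 2)) (adjrel_profile n d) + {#(CC, if t = 0 then 1 else 2), (PP, 2)#}"

definition rel_profile_C :: "nat \<Rightarrow> nat \<Rightarrow> (vclass \<times> nat) multiset" where
  "rel_profile_C n d = image_mset (\<lambda>i. (aclass i, if i = 0 then 1 else 2)) (adjrel_profile n d)
     + image_mset (\<lambda>i. (bclass i, if i = 0 then 1 else 2)) (adjrel_profile n d) + {#(CC, 0), (PP, 1)#}"

definition rel_profile_P :: "nat \<Rightarrow> nat \<Rightarrow> (vclass \<times> nat) multiset" where
  "rel_profile_P n d = image_mset (\<lambda>i. (aclass i, 2)) (adjrel_profile n d)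
     + image_mset (\<lambda>i. (bclass i, 2)) (adjrel_profile n d) + {#(CC, 1), (PP, 0)#}"

fun rel_profile :: "nat \<Rightarrow> nat \<Rightarrow> nat \<Rightarrow> nat \<Rightarrow> vclass \<Rightarrow> (vclass \<times> nat) multiset" where
  "rel_profile n d lam mu A0 = rel_profile_A n d lam mu 0"
| "rel_profile n d lam mu A1 = rel_profile_A n d lam mu 1"
| "rel_profile n d lam mu A2 = rel_profile_A n d lam mu 2"
| "rel_profile n d lam mu B0 = rel_profile_B n d lam mu 0"
| "rel_profile n d lam mu B1 = rel_profile_B n d lam mu 1"
| "rel_profile n d lam mu B2 = rel_profile_B n d lam mu 2"
| "rel_profile n d lam mu CC = rel_profile_C n d"
| "rel_profile n d lam mu PP = rel_profile_P n d"

lemma rel_profile_aclass: "rel_profile n d lam mu (aclass (adjrel E x y)) = rel_profile_A n d lam mu (adjrel E x y)"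
  using adjrel_cases[of E x y] by (elim disjE) (simp_all del: adjrel_eq_0_iff)

lemma rel_profile_bclass: "rel_profile n d lam mu (bclass (adjrel E x y)) = rel_profile_B n d lam mu (adjrel E x y)"
  using adjrel_cases[of E x y] by (elim disjE) (simp_all del: adjrel_eq_0_iff)

definition class_profile :: "nat \<Rightarrow> nat \<Rightarrow> vclass multiset" where
  "class_profile n d = image_mset aclass (adjrel_profile n d) + image_mset bclass (adjrel_profile n d) + {#CC, PP#}"

context srg
begin

lemma image_mset_fun_adjrel:
  "a \<in> V \<Longrightarrow> image_mset (\<lambda>w. f (adjrel E w a)) (mset_set V) = image_mset f (adjrel_profile n d)"
  using image_mset_adjrel[symmetric] by (simp add: multiset.map_comp comp_def)

lemma image_mset_fun_adjrel_pair:
  assumes "a \<in> V" "u \<in> V"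
  shows "image_mset (\<lambda>w. f (adjrel E w a) (adjrel E u w)) (mset_set V)
    = image_mset (\<lambda>(i, j). f i j) (isect_profile n d lam mu (adjrel E u a))"
proof -
  have "image_mset (\<lambda>w. f (adjrel E w a) (adjrel E u w)) (mset_set V)
      = image_mset (\<lambda>(i, j). f i j) (image_mset (\<lambda>w. (adjrel E w a, adjrel E w u)) (mset_set V))"
    by (simp add: multiset.map_comp comp_def adjrel_commute[of u])
  then show ?thesis using image_mset_adjrel_pair[OF assms] by simp
qed

end

context srg_pair
begin

lemma image_mset_class_rel:
  assumes x: "x \<in> V"
  shows "image_mset (\<lambda>y. (vclass_of y, adjrel EG x y)) (mset_set V) = rel_profile n d lam mu (vclass_of x)"
proof -
  let ?g = "\<lambda>y. (vclass_of y, adjrel EG x y)"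
  have split: "image_mset ?g (mset_set V) = image_mset (\<lambda>w. ?g (InA w)) (mset_set VA)
      + image_mset (\<lambda>w. ?g (InB w)) (mset_set VB) + {#?g Conn, ?g Pend#}"
    by (simp add: mset_set_V multiset.map_comp comp_def)
  from x show ?thesis
  proof (cases rule: constr_V_cases)
    case (1 u)
    have "image_mset (\<lambda>w. ?g (InA w)) (mset_set VA)
        = image_mset (\<lambda>(i, j). (aclass i, j)) (isect_profile n d lam mu (adjrel EA u a1))"
      using A.image_mset_fun_adjrel_pair[OF a1_in_VA 1(1), of "\<lambda>i j. (aclass i, j)"] 1 by simp
    moreover have "image_mset (\<lambda>w. ?g (InB w)) (mset_set VB) = image_mset (\<lambda>i. (bclass i, 2)) (adjrel_profile n d)"
      using B.image_mset_fun_adjrel[OF b1_in_VB, of "\<lambda>i. (bclass i, 2::nat)"] 1 by simp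
    ultimately show ?thesis
      unfolding split using 1 by (simp add: rel_profile_aclass rel_profile_A_def)
  next
    case (2 u)
    have "image_mset (\<lambda>w. ?g (InB w)) (mset_set VB)
        = image_mset (\<lambda>(i, j). (bclass i, j)) (isect_profile n d lam mu (adjrel EB u b1))"
      using B.image_mset_fun_adjrel_pair[OF b1_in_VB 2(1), of "\<lambda>i j. (bclass i, j)"] 2 by simp
    moreover have "image_mset (\<lambda>w. ?g (InA w)) (mset_set VA) = image_mset (\<lambda>i. (aclass i, 2)) (adjrel_profile n d)"
      using A.image_mset_fun_adjrel[OF a1_in_VA, of "\<lambda>i. (aclass i, 2::nat)"] 2 by simp
    ultimately show ?thesis
      unfolding split using 2 by (simp add: rel_profile_bclass rel_profile_B_def add_ac)
  next
    case 3
    then show ?thesis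
      unfolding split
      using A.image_mset_fun_adjrel[OF a1_in_VA, of "\<lambda>i. (aclass i, if i = 0 then 1 else 2::nat)"]
        B.image_mset_fun_adjrel[OF b1_in_VB, of "\<lambda>i. (bclass i, if i = 0 then 1 else 2::nat)"]
      by (simp add: rel_profile_C_def)
  next
    case 4
    then show ?thesis
      unfolding split
      using A.image_mset_fun_adjrel[OF a1_in_VA, of "\<lambda>i. (aclass i, 2::nat)"]
        B.image_mset_fun_adjrel[OF b1_in_VB, of "\<lambda>i. (bclass i, 2::nat)"]
      by (simp add: rel_profile_P_def)
  qed
qed

lemma image_mset_vclass: "image_mset vclass_of (mset_set V) = class_profile n d"
  using A.image_mset_fun_adjrel[OF a1_in_VA, of aclass] B.image_mset_fun_adjrel[OF b1_in_VB, of bclass]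
  by (simp add: mset_set_V multiset.map_comp comp_def class_profile_def)

lemma omega_ms_eq_class_profile:
  "omega_ms V EG r
    = image_mset (omega_quot (wstar_quot (2 * n + 2) d lam mu) (rel_profile n d lam mu) 0 r) (class_profile n d)"
proof -
  have "omega V EG r x = omega_quot (wstar_quot (2 * n + 2) d lam mu) (rel_profile n d lam mu) 0 r (vclass_of x)"
    if "x \<in> V" for x
    by (rule omega_eq_omega_quot[where rel = "adjrel EG"])
      (use that finite_V wstar_eq_wstar_quot image_mset_class_rel in auto)
  then have "omega_ms V EG r
      = image_mset (omega_quot (wstar_quot (2 * n + 2) d lam mu) (rel_profile n d lam mu) 0 r \<circ> vclass_of) (mset_set V)"
    unfolding omega_ms_def using finite_V by (intro image_mset_cong) auto
  then show ?thesis
    by (simp add: image_mset_vclass[symmetric] multiset.map_comp)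
qed

end

section \<open>Recovering \<open>A'\<close> from colour refinement on \<open>G(A', B')\<close>\<close>

fun cr_prev :: "'c crcol \<Rightarrow> 'c crcol" where
  "cr_prev (C0 a) = C0 a" | "cr_prev (CS h M) = h"

fun cr_nbrs :: "'c crcol \<Rightarrow> 'c crcol multiset" where
  "cr_nbrs (C0 a) = {#}" | "cr_nbrs (CS h M) = M"

primrec cr_init :: "'c crcol \<Rightarrow> 'c" where
  "cr_init (C0 a) = a" | "cr_init (CS h M) = cr_init h"

definition cr_deg :: "'c crcol \<Rightarrow> nat" where
  "cr_deg c = size (cr_nbrs c)"

lemma cr_init_cref [simp]: "cr_init (cref V E col r v) = col v"
  by (induction r) auto

lemma cr_deg_cref: "finite V \<Longrightarrow> cr_deg (cref V E col (Suc r) v) = card (nbrs V E v)"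
  by (simp add: cr_deg_def finite_nbrs)

lemma cr_prev_iter_cref: "(cr_prev ^^ k) (cref V E col (k + r) v) = cref V E col r v"
  by (induction k) (simp_all add: funpow_Suc_right del: funpow.simps)

fun within_dist :: "'v set \<Rightarrow> ('v \<Rightarrow> 'v \<Rightarrow> bool) \<Rightarrow> 'v \<Rightarrow> nat \<Rightarrow> 'v \<Rightarrow> bool" where
  "within_dist V E x 0 v \<longleftrightarrow> v = x"
| "within_dist V E x (Suc k) v \<longleftrightarrow> within_dist V E x k v \<or> (\<exists>w\<in>nbrs V E v. within_dist V E x k w)"

fun cr_near_special :: "nat \<Rightarrow> 'c option crcol \<Rightarrow> bool" where
  "cr_near_special 0 c \<longleftrightarrow> cr_init c = None"
| "cr_near_special (Suc k) c \<longleftrightarrow> cr_near_special k (cr_prev c) \<or> (\<exists>m\<in>#cr_nbrs c. cr_near_special k m)"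

lemma cr_near_special_cref:
  assumes "finite V" and "\<And>v. col v = None \<longleftrightarrow> v = x" and "k \<le> r"
  shows "cr_near_special k (cref V E col r v) = within_dist V E x k v"
  using assms(3)
proof (induction k arbitrary: r v)
  case 0
  then show ?case using assms(2) by simp
next
  case (Suc k)
  then obtain r' where r: "r = Suc r'" by (cases r) auto
  have "(\<exists>m\<in>#cr_nbrs (cref V E col r v). cr_near_special k m) = (\<exists>w\<in>nbrs V E v. within_dist V E x k w)"
    using Suc r assms(1) by (auto simp: finite_nbrs)
  then show ?case using Suc r by simp
qed

text \<open>The colours of the connecting vertex and of the pendant vertex are recognisable: the connecting
  vertex is the only vertex of degree 3 with a neighbour of degree 1.\<close>

definition is_conn_col :: "'c crcol \<Rightarrow> bool" where
  "is_conn_col c \<longleftrightarrow> cr_deg c = 3 \<and> (\<exists>m\<in>#cr_nbrs c. cr_deg m = 1)"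

definition is_pend_col :: "'c crcol \<Rightarrow> bool" where
  "is_pend_col c \<longleftrightarrow> cr_deg c = 1 \<and> (\<exists>m\<in>#cr_nbrs c. is_conn_col m)"

text \<open>After individualising a vertex \<open>x0\<close> of \<open>A\<close>, the vertices of \<open>A\<close> are those within distance 2 of
  \<open>x0\<close> (the diameter of \<open>A\<close>) that are not reached through the connecting vertex.\<close>

definition is_A_col :: "'c option crcol \<Rightarrow> bool" where
  "is_A_col c \<longleftrightarrow> cr_near_special 2 c \<and> \<not> is_conn_col c
     \<and> (cr_near_special 0 c \<or> \<not> (\<exists>m\<in>#cr_nbrs c. is_conn_col m \<and> cr_near_special 1 m))"

text \<open>Turns the colour of a vertex \<open>InA u\<close> in \<open>G(A', B')\<close> into the colour of \<open>u\<close> in \<open>A'\<close>: neighbours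
  with the colour of the connecting vertex are dropped, and the initial colour of \<open>a1\<close> is recovered
  from its degree \<open>d + 1\<close>. Each step down consumes one refinement round of \<open>G\<close>, plus two rounds to
  recognise degrees and the connecting vertex.\<close>

fun strip_conn :: "nat \<Rightarrow> nat \<Rightarrow> nat option crcol \<Rightarrow> nat option crcol" where
  "strip_conn d 0 c = C0 (if cr_init c = None then None else if cr_deg c = d + 1 then Some 1 else Some 0)"
| "strip_conn d (Suc r) c =
     CS (strip_conn d r (cr_prev c)) (image_mset (strip_conn d r) (filter_mset (\<lambda>m. \<not> is_conn_col m) (cr_nbrs c)))"

text \<open>On \<open>WL\<^sub>1\<close> of \<open>G(A', B')\<close> (\<open>2n + 2\<close> rounds) with a vertex \<open>x\<close> of \<open>A\<close> individualised, this returns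
  \<open>WL\<^sub>1\<close> of \<open>A'\<close> (\<open>n\<close> rounds) with \<open>x\<close> individualised; it returns \<open>None\<close> when the connecting or the
  pendant vertex is individualised.\<close>

definition decode_WL1 :: "nat \<Rightarrow> nat \<Rightarrow> nat option crcol multiset \<Rightarrow> nat option crcol multiset option" where
  "decode_WL1 n d M = (if \<exists>c\<in>#M. cr_init c = None \<and> (is_conn_col c \<or> is_pend_col c) then None
      else Some (image_mset (\<lambda>c. (cr_prev ^^ n) (strip_conn d (2 * n) c)) (filter_mset is_A_col M)))"

context srg_pair
begin

lemma card_nbrs_InA: "u \<in> VA \<Longrightarrow> card (nbrs V EG (InA u)) = d + of_bool (u = a1)"
  unfolding nbrs_InA using A.finite_nbrs A.card_nbrs
  by (subst card_Un_disjoint) (auto simp: card_image inj_on_def)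

lemma card_nbrs_InB: "u \<in> VB \<Longrightarrow> card (nbrs V EG (InB u)) = d + of_bool (u = b1)"
  unfolding nbrs_InB using B.finite_nbrs B.card_nbrs
  by (subst card_Un_disjoint) (auto simp: card_image inj_on_def)

lemma card_nbrs_Conn: "card (nbrs V EG Conn) = 3"
  unfolding nbrs_Conn by simp

lemma card_nbrs_Pend: "card (nbrs V EG Pend) = 1"
  unfolding nbrs_Pend by simp

lemma nbrs_InA_cases: "w \<in> nbrs V EG (InA u) \<Longrightarrow> w = Conn \<or> (\<exists>w'\<in>VA. w = InA w')"
  unfolding nbrs_InA by (auto simp: nbrs_def split: if_splits)

lemma nbrs_InB_cases: "w \<in> nbrs V EG (InB u) \<Longrightarrow> w = Conn \<or> (\<exists>w'\<in>VB. w = InB w')"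
  unfolding nbrs_InB by (auto simp: nbrs_def split: if_splits)

lemma Conn_in_nbrs_InA: "Conn \<in> nbrs V EG (InA u) \<longleftrightarrow> u = a1"
  unfolding nbrs_InA by auto

lemma Conn_in_nbrs_InB: "Conn \<in> nbrs V EG (InB u) \<longleftrightarrow> u = b1"
  unfolding nbrs_InB by auto

lemma deg3_with_leaf_iff_Conn:
  assumes v: "v \<in> V"
  shows "card (nbrs V EG v) = 3 \<and> (\<exists>w\<in>nbrs V EG v. card (nbrs V EG w) = 1) \<longleftrightarrow> v = Conn"
proof -
  have no_leaf: False
    if "v \<noteq> Conn" "card (nbrs V EG v) = 3" "w \<in> nbrs V EG v" "card (nbrs V EG w) = 1" for w
    using v
  proof (cases rule: constr_V_cases)
    case (1 u)
    then have "2 \<le> d" using that(2) card_nbrs_InA by (cases "u = a1") auto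
    then show False
      using nbrs_InA_cases[of w u] that(3,4) 1 card_nbrs_Conn card_nbrs_InA by force
  next
    case (2 u)
    then have "2 \<le> d" using that(2) card_nbrs_InB by (cases "u = b1") auto
    then show False
      using nbrs_InB_cases[of w u] that(3,4) 2 card_nbrs_Conn card_nbrs_InB by force
  qed (use that card_nbrs_Pend in simp_all)
  have "Pend \<in> nbrs V EG Conn" by (simp add: nbrs_Conn)
  then show ?thesis using no_leaf card_nbrs_Conn card_nbrs_Pend by auto
qed

lemma is_conn_col_cref:
  assumes "v \<in> V" "2 \<le> r"
  shows "is_conn_col (cref V EG col r v) \<longleftrightarrow> v = Conn"
proof -
  obtain r' where r: "r = Suc (Suc r')" using assms(2) by (metis add_2_eq_Suc le_Suc_ex)
  have "is_conn_col (cref V EG col r v)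
      \<longleftrightarrow> card (nbrs V EG v) = 3 \<and> (\<exists>w\<in>nbrs V EG v. card (nbrs V EG w) = 1)"
    unfolding is_conn_col_def r using finite_V by (simp add: cr_deg_def finite_nbrs)
  then show ?thesis using deg3_with_leaf_iff_Conn[OF assms(1)] by simp
qed

lemma is_pend_col_cref:
  assumes v: "v \<in> V" and "3 \<le> r" and d: "1 \<le> d"
  shows "is_pend_col (cref V EG col r v) \<longleftrightarrow> v = Pend"
proof -
  obtain r' where r: "r = Suc r'" "2 \<le> r'" using assms(2) by (cases r) auto
  have "is_pend_col (cref V EG col r v)
      \<longleftrightarrow> card (nbrs V EG v) = 1 \<and> (\<exists>w\<in>nbrs V EG v. is_conn_col (cref V EG col r' w))"
    unfolding is_pend_col_def r(1) using finite_V by (simp add: cr_deg_def finite_nbrs)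
  also have "\<dots> \<longleftrightarrow> card (nbrs V EG v) = 1 \<and> Conn \<in> nbrs V EG v"
    using is_conn_col_cref[OF _ r(2)] nbrs_subset[of V EG v] by auto
  also have "\<dots> \<longleftrightarrow> v = Pend"
    using v d
    by (cases rule: constr_V_cases)
      (auto simp: card_nbrs_InA card_nbrs_InB Conn_in_nbrs_InA Conn_in_nbrs_InB card_nbrs_Conn nbrs_Pend)
  finally show ?thesis .
qed

lemma three_le_card_V: "3 \<le> card V"
  using A.card_V A.finite_V a1_in_VA card_V by (cases n) auto

lemma decode_WL1_Conn_Pend:
  assumes v: "v = Conn \<or> v = Pend" and d: "1 \<le> d"
  shows "decode_WL1 n d (WL1 V EG (indiv uncolored v)) = None"
proof -
  have vV: "v \<in> V" using v by (auto simp: constr_V_def)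
  let ?c = "cref V EG (indiv uncolored v) (card V) v"
  have "?c \<in># WL1 V EG (indiv uncolored v)" unfolding WL1_def using vV finite_V by simp
  moreover have "cr_init ?c = None" by (simp add: indiv_def)
  moreover have "is_conn_col ?c \<or> is_pend_col ?c"
    using v is_conn_col_cref[OF vV, of "card V"] is_pend_col_cref[OF vV _ d, of "card V"] three_le_card_V
    by auto
  ultimately have "\<exists>c\<in>#WL1 V EG (indiv uncolored v). cr_init c = None \<and> (is_conn_col c \<or> is_pend_col c)"
    by blast
  then show ?thesis unfolding decode_WL1_def by simp
qed

end

locale srg_pair_at = srg_pair +
  fixes x0 :: 'a
  assumes x0_in_VA: "x0 \<in> VA" and mu_pos: "0 < mu"
begin

abbreviation colG :: "('a, 'b) gvert \<Rightarrow> nat option" where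
  "colG \<equiv> indiv uncolored (InA x0)"

abbreviation colA :: "'a \<Rightarrow> nat option" where
  "colA \<equiv> indiv (single_col a1) x0"

abbreviation near :: "nat \<Rightarrow> ('a, 'b) gvert \<Rightarrow> bool" where
  "near \<equiv> within_dist V EG (InA x0)"

lemma near_Conn_1: "near 1 Conn \<longleftrightarrow> x0 = a1"
  by (auto simp: nbrs_Conn)

lemma near_InB_1: "\<not> near 1 (InB u)"
  by (auto simp: nbrs_InB)

lemma near_Pend_1: "\<not> near 1 Pend"
  by (auto simp: nbrs_Pend)

lemma near_InA_2:
  assumes u: "u \<in> VA"
  shows "near 2 (InA u)"
proof -
  have InA_nbr: "InA w \<in> nbrs V EG (InA w')" if "EA w' w" for w w'
    using that A.edge_in_V by (auto simp: nbrs_InA nbrs_def constr_V_def)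
  from A.dist_le_2[OF mu_pos x0_in_VA u]
  consider "u = x0" | "EA x0 u" | w where "EA x0 w" "EA w u" by blast
  then show ?thesis
  proof cases
    case 2
    then show ?thesis using InA_nbr[of u x0] A.edge_sym by (auto simp: numeral_2_eq_2)
  next
    case (3 w)
    then show ?thesis using InA_nbr[of u w] InA_nbr[of w x0] A.edge_sym by (auto simp: numeral_2_eq_2)
  qed (simp add: numeral_2_eq_2)
qed

lemma near_InB_2:
  assumes "near 2 (InB u)"
  shows "u = b1 \<and> x0 = a1"
proof -
  obtain w where w: "w \<in> nbrs V EG (InB u)" "near 1 w"
    using assms near_InB_1 by (auto simp: numeral_2_eq_2)
  then have "w = Conn"
    using nbrs_InB_cases[OF w(1)] near_InB_1 by blast
  then show ?thesis using w near_Conn_1 Conn_in_nbrs_InB by auto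
qed

lemma near_Pend_2: "near 2 Pend \<Longrightarrow> x0 = a1"
  using near_Pend_1 near_Conn_1 by (auto simp: numeral_2_eq_2 nbrs_Pend)

lemma cr_near_special_cref_colG: "k \<le> r \<Longrightarrow> cr_near_special k (cref V EG colG r v) \<longleftrightarrow> near k v"
  by (rule cr_near_special_cref[OF finite_V]) (simp add: indiv_def)

lemma near_conn_nbr_cref:
  assumes "3 \<le> r"
  shows "(\<exists>m\<in>#cr_nbrs (cref V EG colG r v). is_conn_col m \<and> cr_near_special 1 m)
    \<longleftrightarrow> Conn \<in> nbrs V EG v \<and> near 1 Conn"
proof -
  obtain r' where r': "r = Suc r'" "2 \<le> r'" using assms by (cases r) auto
  have "(\<exists>m\<in>#cr_nbrs (cref V EG colG r v). is_conn_col m \<and> cr_near_special 1 m)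
      \<longleftrightarrow> (\<exists>w\<in>nbrs V EG v. is_conn_col (cref V EG colG r' w) \<and> cr_near_special 1 (cref V EG colG r' w))"
    unfolding r'(1) using finite_V by (simp add: finite_nbrs)
  also have "\<dots> \<longleftrightarrow> Conn \<in> nbrs V EG v \<and> near 1 Conn"
    using is_conn_col_cref[OF _ r'(2)] cr_near_special_cref_colG[of 1 r'] r'(2) nbrs_subset[of V EG v]
      is_conn_col_cref[of Conn r']
    by (auto simp del: within_dist.simps simp: constr_V_def)
  finally show ?thesis .
qed

lemma is_A_col_cref:
  assumes v: "v \<in> V" and r: "3 \<le> r"
  shows "is_A_col (cref V EG colG r v) \<longleftrightarrow> (\<exists>u\<in>VA. v = InA u)"
proof -
  have "is_conn_col (cref V EG colG r v) \<longleftrightarrow> v = Conn"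
    by (rule is_conn_col_cref[OF v]) (use r in simp)
  moreover have "cr_near_special 2 (cref V EG colG r v) \<longleftrightarrow> near 2 v"
    using cr_near_special_cref_colG[of 2 r v] r by simp
  moreover have "cr_near_special 0 (cref V EG colG r v) \<longleftrightarrow> near 0 v"
    using cr_near_special_cref_colG[of 0 r v] by simp
  ultimately have "is_A_col (cref V EG colG r v)
      \<longleftrightarrow> near 2 v \<and> v \<noteq> Conn \<and> (near 0 v \<or> \<not> (Conn \<in> nbrs V EG v \<and> near 1 Conn))"
    unfolding is_A_col_def near_conn_nbr_cref[OF r] by simp
  also have "\<dots> \<longleftrightarrow> (\<exists>u\<in>VA. v = InA u)"
    using v
  proof (cases rule: constr_V_cases)
    case (1 u)
    then show ?thesis using near_InA_2 near_Conn_1 Conn_in_nbrs_InA by auto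
  next
    case (2 u)
    then show ?thesis using near_InB_2 near_Conn_1 Conn_in_nbrs_InB by auto
  next
    case 4
    then show ?thesis using near_Pend_2 near_Conn_1 by (auto simp: nbrs_Pend)
  qed simp
  finally show ?thesis .
qed

lemma strip_conn_cref:
  assumes "u \<in> VA"
  shows "strip_conn d r (cref V EG colG (r + 2) (InA u)) = cref VA EA colA r u"
  using assms
proof (induction r arbitrary: u)
  case 0
  have "cr_deg (cref V EG colG 2 (InA u)) = card (nbrs V EG (InA u))"
    using cr_deg_cref[OF finite_V, of EG colG 1 "InA u"] by (simp only: numeral_2_eq_2 One_nat_def)
  then show ?case
    unfolding add_0 using card_nbrs_InA[OF 0]
    by (simp add: indiv_def single_col_def uncolored_def del: cref.simps(2))
next
  case (Suc r)
  let ?c = "cref V EG colG (r + 2)"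
  have "filter_mset (\<lambda>w. \<not> is_conn_col (?c w)) (mset_set (nbrs V EG (InA u)))
      = mset_set {w\<in>nbrs V EG (InA u). w \<noteq> Conn}"
    using is_conn_col_cref[of _ "r + 2"] nbrs_subset[of V EG "InA u"] finite_nbrs[OF finite_V]
    by (subst filter_mset_mset_set[symmetric]) (auto intro: filter_mset_cong)
  also have "{w\<in>nbrs V EG (InA u). w \<noteq> Conn} = InA ` nbrs VA EA u"
    by (auto simp: nbrs_InA)
  also have "mset_set (InA ` nbrs VA EA u) = image_mset InA (mset_set (nbrs VA EA u))"
    by (rule image_mset_mset_set[symmetric]) (auto simp: inj_on_def)
  finally have nbrs_A: "filter_mset (\<lambda>m. \<not> is_conn_col m) (image_mset ?c (mset_set (nbrs V EG (InA u))))
      = image_mset (?c \<circ> InA) (mset_set (nbrs VA EA u))"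
    by (simp add: filter_mset_image_mset multiset.map_comp)
  have "image_mset (strip_conn d r \<circ> (?c \<circ> InA)) (mset_set (nbrs VA EA u))
      = image_mset (cref VA EA colA r) (mset_set (nbrs VA EA u))"
    using Suc.IH A.finite_nbrs nbrs_subset[of VA EA u] by (intro image_mset_cong) auto
  then show ?case
    using Suc.IH[OF Suc.prems] nbrs_A by (simp add: multiset.map_comp)
qed

lemma no_special_conn_pend_col:
  assumes d: "1 \<le> d"
  shows "\<not> (\<exists>c\<in>#WL1 V EG colG. cr_init c = None \<and> (is_conn_col c \<or> is_pend_col c))"
proof
  have N3: "3 \<le> card V" by (rule three_le_card_V)
  have x0_in_V: "InA x0 \<in> V" using x0_in_VA by (simp add: constr_V_def)
  assume "\<exists>c\<in>#WL1 V EG colG. cr_init c = None \<and> (is_conn_col c \<or> is_pend_col c)"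
  then obtain v where "v \<in> V" and c: "cr_init (cref V EG colG (card V) v) = None"
      "is_conn_col (cref V EG colG (card V) v) \<or> is_pend_col (cref V EG colG (card V) v)"
    unfolding WL1_def using finite_V by auto
  then have "v = InA x0" by (simp add: indiv_def split: if_splits)
  then show False
    using c is_conn_col_cref[OF x0_in_V, of "card V" colG] is_pend_col_cref[OF x0_in_V N3 d, of colG] N3
    by simp
qed

lemma filter_is_A_col_WL1:
  "filter_mset is_A_col (WL1 V EG colG) = image_mset (cref V EG colG (2 * n + 2) \<circ> InA) (mset_set VA)"
proof -
  have N3: "3 \<le> 2 * n + 2" using three_le_card_V card_V by simp
  have "filter_mset (\<lambda>v. is_A_col (cref V EG colG (2 * n + 2) v)) (mset_set V)
      = mset_set {v\<in>V. \<exists>u\<in>VA. v = InA u}"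
    using is_A_col_cref[OF _ N3] finite_V
    by (subst filter_mset_mset_set[symmetric]) (auto intro: filter_mset_cong)
  also have "{v\<in>V. \<exists>u\<in>VA. v = InA u} = InA ` VA"
    by (auto simp: constr_V_def)
  also have "mset_set (InA ` VA) = image_mset InA (mset_set VA)"
    by (rule image_mset_mset_set[symmetric]) (auto simp: inj_on_def)
  finally show ?thesis
    unfolding WL1_def card_V by (simp add: filter_mset_image_mset multiset.map_comp)
qed

lemma decode_WL1_InA:
  assumes d: "1 \<le> d"
  shows "decode_WL1 n d (WL1 V EG colG) = Some (WL1 VA EA colA)"
proof -
  have "(cr_prev ^^ n) (strip_conn d (2 * n) (cref V EG colG (2 * n + 2) (InA u))) = cref VA EA colA n u"
    if "u \<in> VA" for u
    using strip_conn_cref[OF that, of "2 * n"] cr_prev_iter_cref[of n VA EA colA n u] by (simp add: mult_2)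
  then have "image_mset (\<lambda>c. (cr_prev ^^ n) (strip_conn d (2 * n) c)) (filter_mset is_A_col (WL1 V EG colG))
      = image_mset (cref VA EA colA n) (mset_set VA)"
    unfolding filter_is_A_col_WL1 multiset.map_comp using A.finite_V by (intro image_mset_cong) auto
  also have "\<dots> = WL1 VA EA colA"
    by (simp add: WL1_def A.card_V)
  finally show ?thesis
    using no_special_conn_pend_col[OF d] unfolding decode_WL1_def by simp
qed

end

section \<open>Degenerate parameters: \<open>\<mu> = 0\<close> or \<open>n = 1\<close>\<close>

text \<open>If \<open>\<mu> = 0\<close>, then \<open>WL\<^sub>3\<^sub>/\<^sub>2(A')\<close> is determined by the parameters: individualising \<open>x\<close> in \<open>A'\<close> gives an
  equitable partition by the tags (\<open>v = x\<close>, \<open>v = a\<close>, \<open>v\<close> in the clique of \<open>x\<close>, \<open>v\<close> in the clique of \<open>a\<close>).\<close>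

definition cnbhd :: "'a set \<Rightarrow> ('a \<Rightarrow> 'a \<Rightarrow> bool) \<Rightarrow> 'a \<Rightarrow> 'a set" where
  "cnbhd V E p = insert p (nbrs V E p)"

type_synonym vtag = "bool \<times> bool \<times> bool \<times> bool"

fun tags_clique_x :: "nat \<Rightarrow> nat \<Rightarrow> vtag multiset" where
  "tags_clique_x d 0 = {#(True, True, True, True)#} + replicate_mset d (False, False, True, True)"
| "tags_clique_x d (Suc 0) = {#(True, False, True, True), (False, True, True, True)#}
     + replicate_mset (d - 1) (False, False, True, True)"
| "tags_clique_x d (Suc (Suc _)) = {#(True, False, True, False)#} + replicate_mset d (False, False, True, False)"

fun tags_clique_a :: "nat \<Rightarrow> nat \<Rightarrow> vtag multiset" where
  "tags_clique_a d 0 = tags_clique_x d 0"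
| "tags_clique_a d (Suc 0) = tags_clique_x d 1"
| "tags_clique_a d (Suc (Suc _)) = {#(False, True, False, True)#} + replicate_mset d (False, False, False, True)"

definition tags_all :: "nat \<Rightarrow> nat \<Rightarrow> nat \<Rightarrow> vtag multiset" where
  "tags_all n d t = (if t = 2
     then tags_clique_x d 2 + tags_clique_a d 2 + replicate_mset (n - (d + 1) - (d + 1)) (False, False, False, False)
     else tags_clique_x d t + replicate_mset (n - (d + 1)) (False, False, False, False))"

definition tags_nbrs :: "nat \<Rightarrow> nat \<Rightarrow> vtag \<Rightarrow> vtag multiset" where
  "tags_nbrs d t k = (case k of (bx, ba, cx, ca) \<Rightarrow>
     if cx then tags_clique_x d t - {#k#} else if ca then tags_clique_a d t - {#k#}
     else replicate_mset d (False, False, False, False))"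

definition tag_col :: "vtag \<Rightarrow> nat option" where
  "tag_col k = (case k of (bx, ba, cx, ca) \<Rightarrow> if bx then None else Some (if ba then 1 else 0))"

locale srg_cliques = srg V E n d lam 0
  for V :: "'a set" and E n d lam
begin

lemma no_common_nbr:
  assumes "u \<in> V" "v \<in> V" "u \<noteq> v" "\<not> E u v" "E w u" "E w v"
  shows False
proof -
  have "w \<in> nbrs V E u \<inter> nbrs V E v" using assms edge_sym edge_in_V by (auto simp: nbrs_def)
  then show False using card_common_nbrs_nonadj[OF assms(1-4)] finite_nbrs by auto
qed

lemma cnbhd_eq_if_edge:
  assumes "E u v"
  shows "cnbhd V E u = cnbhd V E v"
proof -
  have sub: "cnbhd V E p \<subseteq> cnbhd V E q" if pq: "E p q" for p q
  proof
    fix w assume "w \<in> cnbhd V E p"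
    then consider "w = p" | "E p w" by (auto simp: cnbhd_def nbrs_def)
    then show "w \<in> cnbhd V E q"
    proof cases
      case 1
      then show ?thesis using pq edge_sym edge_in_V by (auto simp: cnbhd_def nbrs_def)
    next
      case 2
      then show ?thesis
        using no_common_nbr[of w q p] edge_in_V[OF pq] edge_in_V[of p w] pq edge_sym
        by (auto simp: cnbhd_def nbrs_def)
    qed
  qed
  show ?thesis using sub[OF assms] sub[OF edge_sym[OF assms]] by auto
qed

lemma cnbhd_eq_if_mem: "v \<in> cnbhd V E p \<Longrightarrow> cnbhd V E v = cnbhd V E p"
  using cnbhd_eq_if_edge edge_sym by (auto simp: cnbhd_def nbrs_def)

lemma card_cnbhd: "p \<in> V \<Longrightarrow> card (cnbhd V E p) = d + 1"
  unfolding cnbhd_def using card_nbrs finite_nbrs edge_irrefl by (simp add: nbrs_def)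

lemma cnbhd_subset: "p \<in> V \<Longrightarrow> cnbhd V E p \<subseteq> V"
  by (auto simp: cnbhd_def nbrs_def)

lemma finite_cnbhd: "finite (cnbhd V E p)"
  using finite_nbrs by (simp add: cnbhd_def)

lemma nbrs_eq_cnbhd_remove: "v \<in> V \<Longrightarrow> nbrs V E v = cnbhd V E v - {v}"
  using edge_irrefl by (auto simp: cnbhd_def nbrs_def)

lemma cnbhd_disjoint:
  assumes "x \<noteq> a" "\<not> E x a"
  shows "cnbhd V E x \<inter> cnbhd V E a = {}"
proof (rule ccontr)
  assume "cnbhd V E x \<inter> cnbhd V E a \<noteq> {}"
  then obtain w where "w \<in> cnbhd V E x" "w \<in> cnbhd V E a" by auto
  then have "cnbhd V E x = cnbhd V E a" using cnbhd_eq_if_mem by metis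
  then have "a \<in> cnbhd V E x" by (simp add: cnbhd_def)
  then show False using assms by (auto simp: cnbhd_def nbrs_def)
qed

end

locale srg_cliques_at = srg_cliques +
  fixes x a
  assumes x_in_V: "x \<in> V" and a_in_V: "a \<in> V"
begin

definition tag :: "'a \<Rightarrow> vtag" where
  "tag v = (v = x, v = a, v \<in> cnbhd V E x, v \<in> cnbhd V E a)"

lemma image_mset_tag_cnbhd_x: "image_mset tag (mset_set (cnbhd V E x)) = tags_clique_x d (adjrel E x a)"
proof -
  have base: "image_mset tag (mset_set (cnbhd V E x)) = {#tag x#} + image_mset tag (mset_set (nbrs V E x))"
    using edge_irrefl finite_nbrs by (simp add: cnbhd_def nbrs_def)
  consider "x = a" | "x \<noteq> a" "E x a" | "x \<noteq> a" "\<not> E x a" by blast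
  then show ?thesis
  proof cases
    case 1
    have "tag w = (False, False, True, True)" if "w \<in> nbrs V E x" for w
      using that 1 edge_irrefl unfolding tag_def by (auto simp: cnbhd_def nbrs_def)
    then have "image_mset tag (mset_set (nbrs V E x)) = replicate_mset d (False, False, True, True)"
      using image_mset_mset_set_const[OF finite_nbrs] card_nbrs[OF x_in_V] by metis
    moreover have "tag x = (True, True, True, True)"
      unfolding tag_def using 1 by (simp add: cnbhd_def)
    ultimately show ?thesis using base 1 by simp
  next
    case 2
    have a_nbr: "a \<in> nbrs V E x" using 2 a_in_V by (simp add: nbrs_def)
    have same: "cnbhd V E a = cnbhd V E x" using cnbhd_eq_if_edge[OF 2(2)] by simp
    have "tag w = (False, False, True, True)" if "w \<in> nbrs V E x - {a}" for w
      using that edge_irrefl same by (auto simp: tag_def cnbhd_def nbrs_def)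
    moreover have "card (nbrs V E x - {a}) = d - 1"
      using card_nbrs[OF x_in_V] a_nbr finite_nbrs by simp
    ultimately have "image_mset tag (mset_set (nbrs V E x - {a})) = replicate_mset (d - 1) (False, False, True, True)"
      using image_mset_mset_set_const[of "nbrs V E x - {a}" tag] finite_nbrs by simp
    then have "image_mset tag (mset_set (nbrs V E x))
        = {#tag a#} + replicate_mset (d - 1) (False, False, True, True)"
      using a_nbr finite_nbrs by (simp add: mset_set.remove[of _ a])
    moreover have "tag x = (True, False, True, True)" "tag a = (False, True, True, True)"
      using 2 same by (auto simp: tag_def cnbhd_def)
    ultimately show ?thesis using base 2 by (simp add: adjrel_def)
  next
    case 3
    have disj: "cnbhd V E x \<inter> cnbhd V E a = {}" using cnbhd_disjoint 3 by simp
    have "tag w = (False, False, True, False)" if "w \<in> nbrs V E x" for w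
      using that disj edge_irrefl by (auto simp: tag_def cnbhd_def nbrs_def)
    then have "image_mset tag (mset_set (nbrs V E x)) = replicate_mset d (False, False, True, False)"
      using image_mset_mset_set_const[OF finite_nbrs] card_nbrs[OF x_in_V] by metis
    moreover have "tag x = (True, False, True, False)" using 3 disj by (auto simp: tag_def cnbhd_def)
    ultimately show ?thesis using base 3 by (simp add: adjrel_def numeral_2_eq_2)
  qed
qed

lemma image_mset_tag_cnbhd_a: "image_mset tag (mset_set (cnbhd V E a)) = tags_clique_a d (adjrel E x a)"
proof -
  consider "x = a" | "x \<noteq> a" "E x a" | "x \<noteq> a" "\<not> E x a" by blast
  then show ?thesis
  proof cases
    case 1
    then show ?thesis using image_mset_tag_cnbhd_x by simp
  next
    case 2
    then show ?thesis using image_mset_tag_cnbhd_x cnbhd_eq_if_edge[OF 2(2)] by (simp add: adjrel_def)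
  next
    case 3
    have disj: "cnbhd V E x \<inter> cnbhd V E a = {}" using cnbhd_disjoint 3 by simp
    have "tag w = (False, False, False, True)" if "w \<in> nbrs V E a" for w
      using that disj edge_irrefl by (auto simp: tag_def cnbhd_def nbrs_def)
    then have "image_mset tag (mset_set (nbrs V E a)) = replicate_mset d (False, False, False, True)"
      using image_mset_mset_set_const[OF finite_nbrs] card_nbrs[OF a_in_V] by metis
    moreover have "tag a = (False, True, False, True)" using 3 disj by (auto simp: tag_def cnbhd_def)
    ultimately show ?thesis
      using 3 edge_irrefl finite_nbrs by (simp add: cnbhd_def nbrs_def adjrel_def numeral_2_eq_2)
  qed
qed

lemma image_mset_tag_nbrs:
  assumes v: "v \<in> V"
  shows "image_mset tag (mset_set (nbrs V E v)) = tags_nbrs d (adjrel E x a) (tag v)"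
proof -
  have nb: "nbrs V E v = cnbhd V E v - {v}" by (rule nbrs_eq_cnbhd_remove[OF v])
  consider "v \<in> cnbhd V E x" | "v \<notin> cnbhd V E x" "v \<in> cnbhd V E a" | "v \<notin> cnbhd V E x" "v \<notin> cnbhd V E a"
    by blast
  then show ?thesis
  proof cases
    case 1
    then have "nbrs V E v = cnbhd V E x - {v}" using nb cnbhd_eq_if_mem by simp
    then have "image_mset tag (mset_set (nbrs V E v)) = tags_clique_x d (adjrel E x a) - {#tag v#}"
      using image_mset_mset_set_remove[OF finite_cnbhd 1, of tag] image_mset_tag_cnbhd_x by simp
    then show ?thesis using 1 by (simp add: tags_nbrs_def tag_def)
  next
    case 2
    then have "nbrs V E v = cnbhd V E a - {v}" using nb cnbhd_eq_if_mem by simp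
    then have "image_mset tag (mset_set (nbrs V E v)) = tags_clique_a d (adjrel E x a) - {#tag v#}"
      using image_mset_mset_set_remove[OF finite_cnbhd 2(2), of tag] image_mset_tag_cnbhd_a by simp
    then show ?thesis using 2 by (simp add: tags_nbrs_def tag_def)
  next
    case 3
    have "tag w = (False, False, False, False)" if w: "w \<in> nbrs V E v" for w
    proof -
      have "v \<in> cnbhd V E w" using w edge_sym v by (auto simp: cnbhd_def nbrs_def)
      then have "w \<notin> cnbhd V E x" "w \<notin> cnbhd V E a"
        using 3 cnbhd_eq_if_mem by metis+
      moreover have "x \<in> cnbhd V E x" "a \<in> cnbhd V E a" by (auto simp: cnbhd_def)
      ultimately show ?thesis by (auto simp: tag_def)
    qed
    then have "image_mset tag (mset_set (nbrs V E v)) = replicate_mset d (False, False, False, False)"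
      using image_mset_mset_set_const[OF finite_nbrs] card_nbrs[OF v] by metis
    then show ?thesis using 3 by (simp add: tags_nbrs_def tag_def)
  qed
qed

lemma image_mset_tag: "image_mset tag (mset_set V) = tags_all n d (adjrel E x a)"
proof -
  have sub_x: "cnbhd V E x \<subseteq> V" and sub_a: "cnbhd V E a \<subseteq> V"
    using cnbhd_subset x_in_V a_in_V by auto
  have in_x: "x \<in> cnbhd V E x" and in_a: "a \<in> cnbhd V E a" by (auto simp: cnbhd_def)
  have card_rest: "card (V - cnbhd V E x) = n - (d + 1)"
    using card_Diff_subset[OF finite_cnbhd sub_x] card_cnbhd[OF x_in_V] card_V by simp
  consider "x = a \<or> E x a" | "x \<noteq> a" "\<not> E x a" by blast
  then show ?thesis
  proof cases
    case 1
    have same: "cnbhd V E a = cnbhd V E x" using 1 cnbhd_eq_if_edge[of x a] by auto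
    note mset_set_split[OF finite_V sub_x]
    moreover have "tag w = (False, False, False, False)" if "w \<in> V - cnbhd V E x" for w
      using that same in_x in_a by (auto simp: tag_def)
    then have "image_mset tag (mset_set (V - cnbhd V E x)) = replicate_mset (n - (d + 1)) (False, False, False, False)"
      using image_mset_mset_set_const[of "V - cnbhd V E x" tag] finite_V card_rest by simp
    moreover have "adjrel E x a \<noteq> 2" using 1 by (auto simp: adjrel_def)
    ultimately show ?thesis using image_mset_tag_cnbhd_x by (simp add: tags_all_def)
  next
    case 2
    have disj: "cnbhd V E x \<inter> cnbhd V E a = {}" using cnbhd_disjoint 2 by simp
    have "cnbhd V E a \<subseteq> V - cnbhd V E x" using sub_a disj by auto
    then have "mset_set V = mset_set (cnbhd V E x) + mset_set (cnbhd V E a) + mset_set (V - cnbhd V E x - cnbhd V E a)"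
      using mset_set_split[OF finite_V sub_x] mset_set_split[of "V - cnbhd V E x" "cnbhd V E a"] finite_V
      by (simp add: Diff_Diff_Int add.assoc)
    moreover have "tag w = (False, False, False, False)" if "w \<in> V - cnbhd V E x - cnbhd V E a" for w
      using that in_x in_a by (auto simp: tag_def)
    moreover have "card (V - cnbhd V E x - cnbhd V E a) = n - (d + 1) - (d + 1)"
      using card_rest card_Diff_subset[OF finite_cnbhd, of a "V - cnbhd V E x"] sub_a disj card_cnbhd[OF a_in_V]
      by auto
    ultimately show ?thesis
      using image_mset_mset_set_const[of "V - cnbhd V E x - cnbhd V E a" tag] finite_V
        image_mset_tag_cnbhd_x image_mset_tag_cnbhd_a 2
      by (simp add: tags_all_def adjrel_def)
  qed
qed

lemma WL1_indiv_eq: "WL1 V E (indiv (single_col a) x)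
    = image_mset (cref_quot tag_col (tags_nbrs d (adjrel E x a)) n) (tags_all n d (adjrel E x a))"
proof -
  have "WL1 V E (indiv (single_col a) x) = image_mset (cref_quot tag_col (tags_nbrs d (adjrel E x a)) n \<circ> tag) (mset_set V)"
    unfolding WL1_def card_V
    using cref_eq_cref_quot[OF finite_V, where cls = tag and cc = tag_col and Q = "tags_nbrs d (adjrel E x a)"]
      image_mset_tag_nbrs finite_V
    by (intro image_mset_cong) (auto simp: indiv_def single_col_def tag_col_def tag_def)
  then show ?thesis by (simp add: image_mset_tag[symmetric] multiset.map_comp)
qed

end

lemma (in srg_cliques) WL32_single_col:
  assumes a: "a \<in> V"
  shows "WL32 V E (single_col a)
    = image_mset (\<lambda>t. image_mset (cref_quot tag_col (tags_nbrs d t) n) (tags_all n d t)) (adjrel_profile n d)"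
proof -
  have "WL32 V E (single_col a)
      = image_mset (\<lambda>x. (\<lambda>t. image_mset (cref_quot tag_col (tags_nbrs d t) n) (tags_all n d t)) (adjrel E x a)) (mset_set V)"
    unfolding WL32_def
    using srg_cliques_at.WL1_indiv_eq[of V E n d lam _ a] a finite_V
    by (intro image_mset_cong) (auto simp: srg_cliques_at_def srg_cliques_at_axioms_def srg_cliques_axioms)
  also have "\<dots> = image_mset (\<lambda>t. image_mset (cref_quot tag_col (tags_nbrs d t) n) (tags_all n d t)) (adjrel_profile n d)"
    by (rule image_mset_fun_adjrel[OF a])
  finally show ?thesis .
qed

lemma (in srg) WL32_card_1:
  assumes "n = 1" "a \<in> V"
  shows "WL32 V E (single_col a) = {#{#CS (C0 None) {#}#}#}"
proof -
  have V: "V = {a}" using assms card_V finite_V by (metis card_1_singletonE singletonD)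
  have "nbrs V E a = {}" using edge_irrefl V by (auto simp: nbrs_def)
  then show ?thesis unfolding WL32_def WL1_def V by (simp add: indiv_def)
qed

lemma WL32_single_col_eq_if_degenerate:
  assumes "srg VA EA n d lam mu" "srg VB EB n d lam mu" "a1 \<in> VA" "b1 \<in> VB" and "mu = 0 \<or> n = 1"
  shows "WL32 VA EA (single_col a1) = WL32 VB EB (single_col b1)"
  using assms(5)
proof
  assume "mu = 0"
  then have "srg_cliques VA EA n d lam" "srg_cliques VB EB n d lam"
    using assms(1,2) by (simp_all add: srg_cliques_def)
  then show ?thesis
    using srg_cliques.WL32_single_col[OF _ assms(3)] srg_cliques.WL32_single_col[OF _ assms(4)] by simp
qed (use srg.WL32_card_1[OF assms(1) _ assms(3)] srg.WL32_card_1[OF assms(2) _ assms(4)] in simp)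

section \<open>Distinguishing \<open>G(A', B')\<close> from \<open>G(A', A')\<close>\<close>

fun swap_gvert :: "('a, 'b) gvert \<Rightarrow> ('b, 'a) gvert" where
  "swap_gvert (InA u) = InB u" | "swap_gvert (InB u) = InA u" | "swap_gvert Conn = Conn" | "swap_gvert Pend = Pend"

lemma bij_betw_swap_gvert: "bij_betw swap_gvert (constr_V VA VB) (constr_V VB VA)"
  by (rule bij_betw_byWitness[where f' = swap_gvert]) (auto simp: constr_V_def)

lemma constr_E_swap_gvert: "constr_E EB EA b1 a1 (swap_gvert x) (swap_gvert y) = constr_E EA EB a1 b1 x y"
  by (cases x; cases y) auto

context srg_pair
begin

lemma srg_pair_swap: "srg_pair VB EB VA EA n d lam mu b1 a1"
  by (simp add: srg_pair_def srg_pair_axioms_def A.srg_axioms B.srg_axioms a1_in_VA b1_in_VB)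

lemma WL1_InB_eq_swap:
  "WL1 V EG (indiv uncolored (InB u)) = WL1 (constr_V VB VA) (constr_E EB EA b1 a1) (indiv uncolored (InA u))"
  by (rule WL1_bij_betw[OF finite_V bij_betw_swap_gvert, symmetric])
    (auto simp: constr_E_swap_gvert indiv_def uncolored_def elim: swap_gvert.elims)

lemma image_mset_decode_WL32:
  assumes mu: "0 < mu" and d: "1 \<le> d"
  shows "image_mset (decode_WL1 n d) (WL32 V EG uncolored)
    = image_mset Some (WL32 VA EA (single_col a1)) + image_mset Some (WL32 VB EB (single_col b1)) + {#None, None#}"
proof -
  let ?F = "\<lambda>x. decode_WL1 n d (WL1 V EG (indiv uncolored x))"
  have "?F (InA u) = Some (WL1 VA EA (indiv (single_col a1) u))" if "u \<in> VA" for u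
    using srg_pair_at.decode_WL1_InA[OF _ d, of VA EA VB EB n lam mu a1 b1 u] that mu
    by (simp add: srg_pair_at_def srg_pair_at_axioms_def srg_pair_axioms)
  then have A: "image_mset (?F \<circ> InA) (mset_set VA) = image_mset Some (WL32 VA EA (single_col a1))"
    unfolding WL32_def multiset.map_comp using A.finite_V by (intro image_mset_cong) auto
  have "?F (InB u) = Some (WL1 VB EB (indiv (single_col b1) u))" if "u \<in> VB" for u
    using srg_pair_at.decode_WL1_InA[OF _ d, of VB EB VA EA n lam mu b1 a1 u] that mu srg_pair_swap
    by (simp add: WL1_InB_eq_swap srg_pair_at_def srg_pair_at_axioms_def)
  then have B: "image_mset (?F \<circ> InB) (mset_set VB) = image_mset Some (WL32 VB EB (single_col b1))"
    unfolding WL32_def multiset.map_comp using B.finite_V by (intro image_mset_cong) auto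
  have "?F Conn = None" "?F Pend = None"
    using decode_WL1_Conn_Pend[OF _ d] by auto
  moreover have "image_mset (decode_WL1 n d) (WL32 V EG uncolored) = image_mset ?F (mset_set V)"
    by (simp add: WL32_def multiset.map_comp comp_def)
  ultimately show ?thesis
    unfolding mset_set_V using A B by (simp add: multiset.map_comp)
qed

end

lemma WL32_constr_ne:
  assumes G: "srg_pair VA EA VB EB n d lam mu a1 b1"
    and ne: "WL32 VA EA (single_col a1) \<noteq> WL32 VB EB (single_col b1)"
  shows "WL32 (constr_V VA VB) (constr_E EA EB a1 b1) uncolored
    \<noteq> WL32 (constr_V VA VA) (constr_E EA EA a1 a1) uncolored"
proof
  interpret G: srg_pair VA EA VB EB n d lam mu a1 b1 by (rule G)
  interpret H: srg_pair VA EA VA EA n d lam mu a1 a1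
    by (simp add: srg_pair_def srg_pair_axioms_def G.A.srg_axioms G.a1_in_VA)
  have "n \<noteq> 0" using G.A.card_V G.A.finite_V G.a1_in_VA by (auto simp: card_gt_0_iff)
  moreover have "\<not> (mu = 0 \<or> n = 1)"
    using WL32_single_col_eq_if_degenerate[OF G.A.srg_axioms G.B.srg_axioms G.a1_in_VA G.b1_in_VB] ne
    by blast
  ultimately have mu: "0 < mu" and d: "1 \<le> d"
    using G.A.degree_pos[OF _ _ G.a1_in_VA] by auto
  assume "WL32 (constr_V VA VB) (constr_E EA EB a1 b1) uncolored
    = WL32 (constr_V VA VA) (constr_E EA EA a1 a1) uncolored"
  then have "image_mset Some (WL32 VB EB (single_col b1)) = image_mset Some (WL32 VA EA (single_col a1))"
    using G.image_mset_decode_WL32[OF mu d] H.image_mset_decode_WL32[OF mu d] by simp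
  then have "image_mset the (image_mset Some (WL32 VB EB (single_col b1)))
      = image_mset the (image_mset Some (WL32 VA EA (single_col a1)))"
    by simp
  then show False
    using ne by (simp add: multiset.map_comp comp_def)
qed

theorem lemma6p4:
  fixes VA :: "'a set" and EA :: "'a \<Rightarrow> 'a \<Rightarrow> bool"
    and VB :: "'b set" and EB :: "'b \<Rightarrow> 'b \<Rightarrow> bool"
    and a1 :: 'a and b1 :: 'b and n d lam mu :: nat
  assumes "strongly_regular VA EA n d lam mu"
    and "strongly_regular VB EB n d lam mu"
    and "a1 \<in> VA" and "b1 \<in> VB"
  shows "(\<forall>r. omega_ms (constr_V VA VB) (constr_E EA EB a1 b1) r
              = omega_ms (constr_V VA VA) (constr_E EA EA a1 a1) r)
       \<and> omega_bullet (constr_V VA VB) (constr_E EA EB a1 b1)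
              = omega_bullet (constr_V VA VA) (constr_E EA EA a1 a1)
       \<and> (WL32 VA EA (single_col a1) \<noteq> WL32 VB EB (single_col b1) \<longrightarrow>
            WL32 (constr_V VA VB) (constr_E EA EB a1 b1) uncolored
              \<noteq> WL32 (constr_V VA VA) (constr_E EA EA a1 a1) uncolored)"
proof -
  interpret A: srg VA EA n d lam mu by (rule srg.intro) (rule assms(1))
  interpret B: srg VB EB n d lam mu by (rule srg.intro) (rule assms(2))
  interpret G: srg_pair VA EA VB EB n d lam mu a1 b1
    by (simp add: srg_pair_def srg_pair_axioms_def A.srg_axioms B.srg_axioms assms(3,4))
  interpret H: srg_pair VA EA VA EA n d lam mu a1 a1
    by (simp add: srg_pair_def srg_pair_axioms_def A.srg_axioms assms(3))
  have omega: "omega_ms G.V G.EG r = omega_ms H.V H.EG r" for r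
    using G.omega_ms_eq_class_profile H.omega_ms_eq_class_profile by simp
  then have "omega_bullet G.V G.EG = omega_bullet H.V H.EG"
    using G.card_V H.card_V by (simp add: omega_bullet_def)
  moreover have "WL32 G.V G.EG uncolored \<noteq> WL32 H.V H.EG uncolored"
    if "WL32 VA EA (single_col a1) \<noteq> WL32 VB EB (single_col b1)"
    using WL32_constr_ne[OF G.srg_pair_axioms that] .
  ultimately show ?thesis using omega by blast
qed

end
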